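(* Let $f$ be a parabolic Dulac germ with $f(x)=x-ax^\alpha\boldsymbol\ell^m+o(x^\alpha\boldsymbol\ell^m)$ as $x\to0^+$, where $a>0$, $\alpha>1$, $m\in\mathbb Z$, $m\le0$. Let $g=\mathrm{id}-f$ and let $x_0>0$ be close to $0$. Let $A_f(x_0,\varepsilon)$ and $A_f^c(x_0,\varepsilon)$ be the discrete and continuous time lengths of the $\varepsilon$-neighborhood of the orbit of $x_0$ (defined below). Then $$A_f^c(x_0,\varepsilon)-A_f(x_0,\varepsilon)=\varepsilon^{2-\frac1\alpha}\boldsymbol\ell(\varepsilon)^{\frac m\alpha}\,k(\varepsilon),$$ where $k(\varepsilon)=O(1)$ as $\varepsilon\to0^+$ and $k$ is high-amplitude oscillatory at $0$; in particular $k$ has no power-logarithm asymptotic behavior, and $A_f^c(x_0,\varepsilon)-A_f(x_0,\varepsilon)=O(\varepsilon^{1+\delta})$ for some $\delta>0$.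
   Context: $\boldsymbol\ell(x)=-1/\log x$, $\boldsymbol\ell_2=\boldsymbol\ell\circ\boldsymbol\ell$. A Dulac series is $\widehat f=\sum_{i\ge1}P_i(\boldsymbol\ell^{-1})x^{\alpha_i}$ with $P_i$ real polynomials and $(\alpha_i)$ a positive, strictly increasing, finite or finitely generated sequence tending to $+\infty$. A Dulac germ is a germ $f$ analytic on some $(0,d)$ such that $f-\sum_{i\le n}P_i(\boldsymbol\ell^{-1})x^{\alpha_i}=o(x^{\alpha_n})$ for every $n$ (for a Dulac series, its Dulac expansion) and which extends to a bounded analytic function on a standard quadratic domain in the sense of Ilyashenko; it is parabolic if $P_1\equiv1$, $\alpha_1=1$ and $f\ne\mathrm{id}$. Discrete length: with $x_n=f^{\circ n}(x_0)$ and $n_\varepsilon$ the integer with $x_{n_\varepsilon}-x_{n_\varepsilon+1}\le2\varepsilon<x_{n_\varepsilon-1}-x_{n_\varepsilon}$, $A_f(x_0,\varepsilon)=x_{n_\varepsilon}+2\varepsilon+2\varepsilon n_\varepsilon$. Continuous length: $f$ is (by known results) the time-one map of the flow $\{f^t\}$ of an analytic vector field $\xi(x)\frac{d}{dx}$ on $(0,d)$ satisfying $\xi(x)\sim-ax^\alpha\boldsymbol\ell^m$, $\xi'(x)\sim-a\alpha x^{\alpha-1}\boldsymbol\ell^m$ and $\xi=-g-\tfrac12\xi\xi'+o(x^{2\alpha-1}\boldsymbol\ell^{2m})$ as $x\to0^+$, with Fatou coordinate $\Psi$, $\Psi'=1/\xi$, $\Psi(f^t(x))=\Psi(x)+t$.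 The continuous critical time $\tau_\varepsilon$ is defined by $f^{\tau_\varepsilon}(x_0)-f^{\tau_\varepsilon+1}(x_0)=2\varepsilon$, and $A^c_f(x_0,\varepsilon)=f^{\tau_\varepsilon}(x_0)+2\varepsilon+2\varepsilon\tau_\varepsilon$. A function $h$ is high-amplitude oscillatory at $0$ if there are sequences $\varepsilon_n^1\to0$, $\varepsilon_n^2\to0$ and reals $A<B$ with $h(\varepsilon_n^1)<A<B<h(\varepsilon_n^2)$ for all $n$. *)

theory Defs
  imports "HOL-Analysis.Analysis" "HOL-Library.Landau_Symbols" "HOL-Library.Extended_Nat"
          "HOL-Computational_Algebra.Polynomial"
begin

definition ell :: "real \<Rightarrow> real" where
  "ell x = - 1 / ln x"

definition real_analytic_on :: "(real \<Rightarrow> real) \<Rightarrow> real set \<Rightarrow> bool" where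
  "real_analytic_on f S \<longleftrightarrow>
     (\<forall>x\<in>S. \<exists>r>0. \<exists>c::nat \<Rightarrow> real. \<forall>y. \<bar>y - x\<bar> < r \<longrightarrow> (\<lambda>n. c n * (y - x) ^ n) sums f y)"

text \<open>Standard quadratic domain in the logarithmic chart zeta = - log z.\<close>
definition std_quad_domain :: "real \<Rightarrow> complex set" where
  "std_quad_domain C = {\<zeta>. Re \<zeta> > C * sqrt (1 + \<bar>Im \<zeta>\<bar>)}"

definition dulac_exponents :: "(nat \<Rightarrow> real) \<Rightarrow> enat \<Rightarrow> bool" where
  "dulac_exponents \<alpha> N \<longleftrightarrow>
     N \<noteq> 0 \<and> \<alpha> 0 > 0 \<and> (\<forall>i. enat (Suc i) < N \<longrightarrow> \<alpha> i < \<alpha> (Suc i)) \<and>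
     (N = \<infinity> \<longrightarrow> filterlim \<alpha> at_top sequentially \<and>
        (\<exists>G. finite G \<and> G \<subseteq> {0<..} \<and>
           (\<forall>i. \<exists>k::real \<Rightarrow> nat. \<alpha> i = (\<Sum>g\<in>G. real (k g) * g))))"

text \<open>Dulac germ with Dulac expansion sum_{i<N} P_i(ell^{-1}) x^{alpha_i} (indices from 0).\<close>
definition dulac_germ_exp ::
  "(real \<Rightarrow> real) \<Rightarrow> (nat \<Rightarrow> real poly) \<Rightarrow> (nat \<Rightarrow> real) \<Rightarrow> enat \<Rightarrow> bool" where
  "dulac_germ_exp f P \<alpha> N \<longleftrightarrow>
     dulac_exponents \<alpha> N \<and>
     (\<forall>i. enat i < N \<longrightarrow> P i \<noteq> 0) \<and>
     (\<forall>n. enat n < N \<longrightarrow>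
        (\<lambda>x. f x - (\<Sum>i\<le>n. poly (P i) (- ln x) * x powr \<alpha> i)) \<in> o[at_right 0](\<lambda>x. x powr \<alpha> n)) \<and>
     (\<exists>d>0. real_analytic_on f {0<..<d}) \<and>
     (\<exists>C>0. \<exists>F. F holomorphic_on std_quad_domain C \<and> bounded (F ` std_quad_domain C) \<and>
        (\<forall>\<^sub>F \<zeta> in at_top. F (complex_of_real \<zeta>) = complex_of_real (f (exp (- \<zeta>)))))"

definition dulac_germ :: "(real \<Rightarrow> real) \<Rightarrow> bool" where
  "dulac_germ f \<longleftrightarrow> (\<exists>P \<alpha> N. dulac_germ_exp f P \<alpha> N)"

definition parabolic_dulac_germ :: "(real \<Rightarrow> real) \<Rightarrow> bool" where
  "parabolic_dulac_germ f \<longleftrightarrow>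
     (\<exists>P \<alpha> N. dulac_germ_exp f P \<alpha> N \<and> P 0 = 1 \<and> \<alpha> 0 = 1) \<and>
     \<not> (\<forall>\<^sub>F x in at_right 0. f x = x)"

definition disc_crit :: "(real \<Rightarrow> real) \<Rightarrow> real \<Rightarrow> real \<Rightarrow> nat" where
  "disc_crit f x0 \<epsilon> = (THE n. n \<ge> 1 \<and>
      (f ^^ n) x0 - (f ^^ Suc n) x0 \<le> 2 * \<epsilon> \<and> 2 * \<epsilon> < (f ^^ (n - 1)) x0 - (f ^^ n) x0)"

definition disc_length :: "(real \<Rightarrow> real) \<Rightarrow> real \<Rightarrow> real \<Rightarrow> real" where
  "disc_length f x0 \<epsilon> = (let n = disc_crit f x0 \<epsilon> in (f ^^ n) x0 + 2 * \<epsilon> + 2 * \<epsilon> * real n)"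

text \<open>Flow f^t on (0,d) defined through the Fatou coordinate Psi: Psi(f^t x) = Psi x + t.\<close>
definition flow :: "(real \<Rightarrow> real) \<Rightarrow> real \<Rightarrow> real \<Rightarrow> real \<Rightarrow> real" where
  "flow \<Psi> d t x = (THE y. y \<in> {0<..<d} \<and> \<Psi> y = \<Psi> x + t)"

definition cont_crit :: "(real \<Rightarrow> real) \<Rightarrow> real \<Rightarrow> real \<Rightarrow> real \<Rightarrow> real" where
  "cont_crit \<Psi> d x0 \<epsilon> = (THE \<tau>. \<tau> \<ge> 0 \<and> flow \<Psi> d \<tau> x0 - flow \<Psi> d (\<tau> + 1) x0 = 2 * \<epsilon>)"

definition cont_length :: "(real \<Rightarrow> real) \<Rightarrow> real \<Rightarrow> real \<Rightarrow> real \<Rightarrow> real" where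
  "cont_length \<Psi> d x0 \<epsilon> = (let \<tau> = cont_crit \<Psi> d x0 \<epsilon> in
      flow \<Psi> d \<tau> x0 + 2 * \<epsilon> + 2 * \<epsilon> * \<tau>)"

definition high_amp_osc :: "(real \<Rightarrow> real) \<Rightarrow> bool" where
  "high_amp_osc h \<longleftrightarrow> (\<exists>e1 e2 :: nat \<Rightarrow> real. \<exists>A B. A < B \<and>
      (\<forall>n. e1 n > 0 \<and> e2 n > 0) \<and> e1 \<longlonglongrightarrow> 0 \<and> e2 \<longlonglongrightarrow> 0 \<and>
      (\<forall>n. h (e1 n) < A \<and> B < h (e2 n)))"

end

theory Submission
  imports Defs "HOL-Real_Asymp.Real_Asymp"
begin

text \<open>
  For small \<open>\<epsilon>\<close> the continuous critical point is the unique \<open>y\<close> with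
  \<open>g y = 2 \<epsilon>\<close>, reached at Fatou time \<open>\<tau> = \<Psi> y - \<Psi> x0\<close>, while the discrete critical point is
  \<open>z = (f ^^ n) x0\<close> with \<open>n = \<lceil>\<tau>\<rceil>\<close>. So \<open>z\<close> lies between \<open>f y\<close> and \<open>y\<close>, at Fatou time
  \<open>t = n - \<tau> \<in> [0,1)\<close> after \<open>y\<close>, and the difference of the two lengths is \<open>y - z - g y * t\<close>.
  The second-order expansion \<open>z = y + t \<xi> y + t\<^sup>2 \<xi> y \<xi>' y / 2 + o(\<xi> y \<xi>' y)\<close> of the flow,
  together with \<open>\<xi> = - g - \<xi> \<xi>' / 2 + o(\<xi> \<xi>')\<close>, turns this into
  \<open>t (1 - t) \<xi> y \<xi>' y / 2 + o(\<xi> y \<xi>' y)\<close>, and \<open>\<xi> y \<xi>' y\<close> is comparable to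
  \<open>\<epsilon> powr (2 - 1/\<alpha>) * ell \<epsilon> powr (m/\<alpha>)\<close>. Hence the normalised difference \<open>k\<close> is bounded; it
  vanishes when \<open>y\<close> is a point of the orbit (\<open>t = 0\<close>) and stays above a positive constant when
  \<open>\<tau>\<close> is a half-integer (\<open>t = 1/2\<close>). Both happen for arbitrarily small \<open>\<epsilon>\<close>, so \<open>k\<close> oscillates
  and has no power-logarithm asymptotics.
\<close>

section \<open>Analytic and asymptotic preliminaries\<close>

lemma real_analytic_on_imp_DERIV:
  assumes "real_analytic_on h S" "x \<in> S"
  shows "(h has_real_derivative deriv h x) (at x)"
proof -
  obtain r c where r: "r > 0" and c: "\<And>y. \<bar>y - x\<bar> < r \<Longrightarrow> (\<lambda>n. c n * (y - x) ^ n) sums h y"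
    using assms unfolding real_analytic_on_def by blast
  define P where "P = (\<lambda>z::real. \<Sum>n. c n * z ^ n)"
  have sm: "summable (\<lambda>n. c n * z ^ n)" if "norm z < r" for z
    using c[of "x + z"] that by (auto dest: sums_summable)
  have "(P has_real_derivative (\<Sum>n. diffs c n * 0 ^ n)) (at 0)"
    unfolding P_def by (rule termdiffs_strong'[of r]) (use sm r in auto)
  then have "((\<lambda>y. P (y - x)) has_real_derivative (\<Sum>n. diffs c n * 0 ^ n) * 1) (at x)"
    by (intro DERIV_chain2[where f = P]) (auto intro!: derivative_eq_intros)
  then have "(h has_real_derivative (\<Sum>n. diffs c n * 0 ^ n) * 1) (at x)"
  proof (rule has_field_derivative_transform_within_open[where S = "ball x r"])
    fix y assume "y \<in> ball x r"
    then have "\<bar>y - x\<bar> < r" by (auto simp: dist_real_def)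
    then show "P (y - x) = h y" using c[of y] unfolding P_def by (simp add: sums_iff)
  qed (use r in auto)
  then show ?thesis by (metis DERIV_imp_deriv)
qed

lemma inj_on_if_DERIV_nonzero:
  fixes h h' :: "real \<Rightarrow> real"
  assumes "\<And>x. x \<in> {a<..<b} \<Longrightarrow> (h has_real_derivative h' x) (at x)"
    and "\<And>x. x \<in> {a<..<b} \<Longrightarrow> h' x \<noteq> 0"
  shows "inj_on h {a<..<b}"
proof (rule inj_onI, rule ccontr)
  fix x y assume x: "x \<in> {a<..<b}" and y: "y \<in> {a<..<b}" and eq: "h x = h y" and ne: "x \<noteq> y"
  have between: "z \<in> {a<..<b}" if "min x y \<le> z" "z \<le> max x y" for z
    using that x y by auto
  obtain z where z: "min x y < z" "z < max x y" "(h has_real_derivative 0) (at z)"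
  proof (rule exE[OF Rolle[of "min x y" "max x y" h]])
    show "min x y < max x y" using ne by auto
    show "h (min x y) = h (max x y)" using eq by (auto simp: min_def max_def)
    show "continuous_on {min x y..max x y} h"
      using assms(1) between by (intro continuous_at_imp_continuous_on ballI DERIV_isCont) auto
    show "h differentiable at z" if "min x y < z" "z < max x y" for z
      using assms(1)[of z] between[of z] that by (auto simp: real_differentiable_def)
  qed auto
  then show False
    using DERIV_unique[OF assms(1) z(3)] assms(2) between[of z] by auto
qed

lemma ell_pos: "0 < x \<Longrightarrow> x < 1 \<Longrightarrow> ell x > 0"
  unfolding ell_def by (simp add: divide_neg_neg)

lemma eventually_at_right_0_1: "\<forall>\<^sub>F x in at_right 0. 0 < x \<and> x < (1::real)"
  using eventually_at_right_real[of 0 1] by simp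

lemma ln_ell_over_ln_tendsto_0: "((\<lambda>y. ln (ell y) / ln y) \<longlongrightarrow> 0) (at_right 0)"
proof -
  have "((\<lambda>x::real. ln (ell (inverse x)) / ln (inverse x)) \<longlongrightarrow> 0) at_top"
    unfolding ell_def by real_asymp
  then show ?thesis unfolding at_right_to_top filterlim_filtermap .
qed

lemma powr_ell_smallo_powr:
  fixes b c p :: real
  assumes "c < b"
  shows "(\<lambda>e. e powr b * ell e powr p) \<in> o[at_right 0](\<lambda>e. e powr c)"
  using assms unfolding ell_def by real_asymp

lemma ell_ratio_tendsto_if_powr_ell_ratio:
  fixes \<theta> :: "real \<Rightarrow> real"
  assumes lim: "((\<lambda>y. \<theta> y / (y powr \<beta> * ell y powr \<gamma>)) \<longlongrightarrow> c) (at_right 0)"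
    and c: "c > 0" and \<beta>: "\<beta> > 0"
    and \<theta>: "\<forall>\<^sub>F y in at_right 0. 0 < \<theta> y \<and> \<theta> y < 1"
  shows "((\<lambda>y. ell (\<theta> y) / ell y) \<longlongrightarrow> 1 / \<beta>) (at_right 0)"
proof -
  have ln_inf: "filterlim (\<lambda>y. ln y) at_infinity (at_right (0::real))"
    using filterlim_at_bot_imp_at_infinity[OF ln_at_0] .
  have "((\<lambda>y. ln (\<theta> y / (y powr \<beta> * ell y powr \<gamma>))) \<longlongrightarrow> ln c) (at_right 0)"
    using tendsto_ln[OF lim] c by simp
  then have "((\<lambda>y. ln (\<theta> y / (y powr \<beta> * ell y powr \<gamma>)) / ln y + \<beta> + \<gamma> * (ln (ell y) / ln y))
      \<longlongrightarrow> 0 + \<beta> + \<gamma> * 0) (at_right 0)"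
    by (intro tendsto_add tendsto_mult tendsto_const ln_ell_over_ln_tendsto_0 tendsto_divide_0[OF _ ln_inf])
  moreover have "\<forall>\<^sub>F y in at_right 0.
      ln (\<theta> y / (y powr \<beta> * ell y powr \<gamma>)) / ln y + \<beta> + \<gamma> * (ln (ell y) / ln y) = ln (\<theta> y) / ln y"
    using eventually_at_right_0_1 \<theta>
  proof eventually_elim
    case (elim y)
    then have "ell y > 0" "ln y < 0" using ell_pos by auto
    then show ?case using elim by (simp add: ln_div ln_mult ln_powr field_simps)
  qed
  ultimately have "((\<lambda>y. ln (\<theta> y) / ln y) \<longlongrightarrow> \<beta>) (at_right 0)"
    by (simp add: Lim_transform_eventually)
  then have "((\<lambda>y. inverse (ln (\<theta> y) / ln y)) \<longlongrightarrow> inverse \<beta>) (at_right 0)"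
    using \<beta> by (intro tendsto_inverse) auto
  moreover have "\<forall>\<^sub>F y in at_right 0. inverse (ln (\<theta> y) / ln y) = ell (\<theta> y) / ell y"
    using eventually_at_right_0_1 \<theta>
  proof eventually_elim
    case (elim y)
    then have "ln y < 0" "ln (\<theta> y) < 0" by auto
    then show ?case unfolding ell_def by (simp add: field_simps)
  qed
  ultimately show ?thesis by (simp add: Lim_transform_eventually inverse_eq_divide)
qed

lemma asymp_equiv_powr_ell_ratio_tendsto:
  fixes p lo \<theta> :: "real \<Rightarrow> real"
  assumes peq: "p \<sim>[at_right 0] (\<lambda>x. C * x powr \<beta> * ell x powr \<gamma>)" and C: "C \<noteq> 0"
    and lo: "((\<lambda>y. lo y / y) \<longlongrightarrow> 1) (at_right 0)"
    and th: "\<forall>\<^sub>F y in at_right 0. 0 < lo y \<and> lo y \<le> \<theta> y \<and> \<theta> y \<le> y"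
  shows "((\<lambda>y. p (\<theta> y) / p y) \<longlongrightarrow> 1) (at_right 0)"
proof -
  define q where "q x = C * x powr \<beta> * ell x powr \<gamma>" for x
  have q_nz: "q x \<noteq> 0" if "0 < x" "x < 1" for x
    using ell_pos[OF that] that C unfolding q_def by simp
  have \<theta>01: "\<forall>\<^sub>F y in at_right 0. 0 < \<theta> y \<and> \<theta> y < 1"
    using th eventually_at_right_0_1 by eventually_elim auto
  have pq: "((\<lambda>x. p x / q x) \<longlongrightarrow> 1) (at_right 0)"
    by (rule asymp_equivD_strong[OF peq[folded q_def]])
      (use eventually_at_right_0_1 q_nz in \<open>auto elim!: eventually_mono\<close>)
  have "(\<theta> \<longlongrightarrow> 0) (at_right 0)"
    by (rule tendsto_sandwich[of "\<lambda>_. 0" _ _ "\<lambda>y. y"]) (use th in \<open>auto elim: eventually_mono\<close>)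
  then have "filterlim \<theta> (at_right 0) (at_right 0)"
    unfolding filterlim_at using \<theta>01 by (auto elim: eventually_mono)
  from filterlim_compose[OF pq this]
  have pq_\<theta>: "((\<lambda>y. p (\<theta> y) / q (\<theta> y)) \<longlongrightarrow> 1) (at_right 0)" .
  have qp: "((\<lambda>y. q y / p y) \<longlongrightarrow> 1) (at_right 0)"
    using tendsto_inverse[OF pq] by (simp add: inverse_eq_divide)
  have \<theta>_y: "((\<lambda>y. \<theta> y / y) \<longlongrightarrow> 1) (at_right 0)"
  proof (rule tendsto_sandwich[of "\<lambda>y. lo y / y" _ _ "\<lambda>_. 1"])
    show "\<forall>\<^sub>F y in at_right 0. lo y / y \<le> \<theta> y / y" "\<forall>\<^sub>F y in at_right 0. \<theta> y / y \<le> 1"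
      using th eventually_at_right_0_1 by (eventually_elim, auto intro: divide_right_mono)+
  qed (use lo in auto)
  have "((\<lambda>y. \<theta> y / (y powr 1 * ell y powr 0)) \<longlongrightarrow> 1) (at_right 0)"
    by (rule Lim_transform_eventually[OF \<theta>_y])
      (use eventually_at_right_0_1 in \<open>eventually_elim, use ell_pos in force\<close>)
  from ell_ratio_tendsto_if_powr_ell_ratio[OF this _ _ \<theta>01]
  have "((\<lambda>y. ell (\<theta> y) / ell y) \<longlongrightarrow> 1) (at_right 0)" by simp
  then have "((\<lambda>y. (\<theta> y / y) powr \<beta> * (ell (\<theta> y) / ell y) powr \<gamma>) \<longlongrightarrow> 1 powr \<beta> * 1 powr \<gamma>) (at_right 0)"
    by (intro tendsto_mult tendsto_powr \<theta>_y tendsto_const) auto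
  moreover have "\<forall>\<^sub>F y in at_right 0. (\<theta> y / y) powr \<beta> * (ell (\<theta> y) / ell y) powr \<gamma> = q (\<theta> y) / q y"
    using \<theta>01 eventually_at_right_0_1
  proof eventually_elim
    case (elim y)
    then show ?case using ell_pos[of y] ell_pos[of "\<theta> y"] C unfolding q_def
      by (simp add: powr_divide field_simps)
  qed
  ultimately have qq: "((\<lambda>y. q (\<theta> y) / q y) \<longlongrightarrow> 1) (at_right 0)"
    by (simp add: Lim_transform_eventually)
  have "((\<lambda>y. p (\<theta> y) / q (\<theta> y) * (q (\<theta> y) / q y) * (q y / p y)) \<longlongrightarrow> 1 * 1 * 1) (at_right 0)"
    by (intro tendsto_mult pq_\<theta> qq qp)
  moreover have "\<forall>\<^sub>F y in at_right 0. p y \<noteq> 0"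
    using asymp_equiv_eventually_zeros[OF peq[folded q_def]] eventually_at_right_0_1
    by eventually_elim (use q_nz in auto)
  then have "\<forall>\<^sub>F y in at_right 0. p (\<theta> y) / q (\<theta> y) * (q (\<theta> y) / q y) * (q y / p y) = p (\<theta> y) / p y"
    using \<theta>01 eventually_at_right_0_1 by eventually_elim (simp add: q_nz)
  ultimately show ?thesis by (simp add: Lim_transform_eventually)
qed

lemma asymp_equiv_powr_ell_ratio_uniform:
  fixes p lo :: "real \<Rightarrow> real"
  assumes peq: "p \<sim>[at_right 0] (\<lambda>x. C * x powr \<beta> * ell x powr \<gamma>)" and C: "C \<noteq> 0"
    and lo: "((\<lambda>y. lo y / y) \<longlongrightarrow> 1) (at_right 0)"
    and lo2: "\<forall>\<^sub>F y in at_right 0. 0 < lo y \<and> lo y \<le> y"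
    and eta: "\<eta> > 0"
  shows "\<forall>\<^sub>F y in at_right 0. \<forall>\<theta>\<in>{lo y..y}. \<bar>p \<theta> / p y - 1\<bar> \<le> \<eta>"
proof -
  define bad where "bad y \<theta> \<longleftrightarrow> \<theta> \<in> {lo y..y} \<and> \<bar>p \<theta> / p y - 1\<bar> > \<eta>" for y \<theta>
  define th where "th y = (if \<exists>\<theta>. bad y \<theta> then SOME \<theta>. bad y \<theta> else y)" for y
  have thb: "bad y (th y)" if "\<exists>\<theta>. bad y \<theta>" for y
    using someI_ex[OF that] that unfolding th_def by simp
  have "\<forall>\<^sub>F y in at_right 0. 0 < lo y \<and> lo y \<le> th y \<and> th y \<le> y"
    using lo2 proof eventually_elim
    case (elim y) then show ?case
      using thb[of y] unfolding th_def bad_def by (cases "\<exists>\<theta>. bad y \<theta>") auto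
  qed
  from asymp_equiv_powr_ell_ratio_tendsto[OF peq C lo this] have "((\<lambda>y. p (th y) / p y) \<longlongrightarrow> 1) (at_right 0)" .
  then have "\<forall>\<^sub>F y in at_right 0. dist (p (th y) / p y) 1 < \<eta>"
    using eta by (rule tendstoD)
  then show ?thesis
  proof eventually_elim
    case (elim y)
    show ?case
    proof (rule ccontr)
      assume "\<not> ?case"
      then have "\<exists>\<theta>. bad y \<theta>" unfolding bad_def by force
      from thb[OF this] elim show False unfolding bad_def dist_real_def by auto
    qed
  qed
qed

text \<open>The algebraic core of \<open>flow_second_order_estimate\<close>: there \<open>A = \<xi> y\<close>, \<open>B = \<xi>' y\<close>, and
  \<open>X2\<close>, \<open>D1\<close>, \<open>Xw\<close> are values of \<open>\<xi>\<close>, \<open>\<xi>'\<close>, \<open>\<xi>\<close> at points within distance \<open>h \<le> g y\<close> of \<open>y\<close>.\<close>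

lemma perturbed_quotient_bound:
  fixes A B Xw X2 D1 h G \<eta> :: real
  assumes A: "A < 0" and B: "B < 0" and eta: "0 \<le> \<eta>" "\<eta> \<le> 1/2"
    and u: "\<bar>X2 / A - 1\<bar> \<le> \<eta>" and v: "\<bar>D1 / B - 1\<bar> \<le> \<eta>" and w: "\<bar>Xw / A - 1\<bar> \<le> \<eta>"
    and h: "0 \<le> h" "h \<le> G" and G: "G \<le> 2 * \<bar>A\<bar>"
  shows "\<bar>(- h * D1 + h / X2 * (A * B)) / Xw\<bar> \<le> 12 * \<eta> * \<bar>B\<bar>"
proof -
  define uu where "uu = X2 / A - 1"
  define vv where "vv = D1 / B - 1"
  have X2: "X2 = A * (1 + uu)" using A by (simp add: uu_def field_simps)
  have D1: "D1 = B * (1 + vv)" using B by (simp add: vv_def field_simps)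
  have uu1: "\<bar>uu\<bar> \<le> \<eta>" using u by (simp add: uu_def)
  have uu: "\<bar>uu\<bar> \<le> \<eta>" "1 + uu \<ge> 1/2" using uu1 eta by arith+
  have vv: "\<bar>vv\<bar> \<le> \<eta>" using v by (simp add: vv_def)
  have num: "- h * D1 + h / X2 * (A * B) = h * B * (- uu / (1 + uu) - vv)"
  proof -
    have "1 + uu > 0" "A \<noteq> 0" using uu(2) A by auto
    moreover have "A + A * uu \<noteq> 0" using calculation by (metis distrib_left mult_1_right mult_eq_0_iff less_irrefl)
    ultimately show ?thesis unfolding X2 D1 by (simp add: field_simps)
  qed
  have "\<bar>uu / (1 + uu)\<bar> \<le> 2 * \<eta>"
  proof -
    have "\<bar>uu / (1 + uu)\<bar> = \<bar>uu\<bar> / (1 + uu)" using uu(2) by (simp add: abs_div)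
    also have "\<dots> \<le> \<bar>uu\<bar> / (1/2)" using uu(2) by (intro divide_left_mono) auto
    also have "\<dots> \<le> 2 * \<eta>" using uu(1) by simp
    finally show ?thesis .
  qed
  then have b1: "\<bar>- uu / (1 + uu) - vv\<bar> \<le> 3 * \<eta>" using vv by linarith
  have xw: "\<bar>Xw\<bar> \<ge> \<bar>A\<bar> / 2"
  proof -
    have "Xw / A \<ge> 1/2" using w eta by linarith
    then have "Xw \<le> A / 2" using A by (simp add: le_divide_eq)
    then show ?thesis using A by linarith
  qed
  have Apos: "\<bar>A\<bar> > 0" using A by simp
  have "\<bar>(- h * D1 + h / X2 * (A * B)) / Xw\<bar> = h * \<bar>B\<bar> * \<bar>- uu / (1 + uu) - vv\<bar> / \<bar>Xw\<bar>"
    unfolding num using h by (simp add: abs_mult abs_div)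
  also have "\<dots> \<le> h * \<bar>B\<bar> * (3 * \<eta>) / (\<bar>A\<bar> / 2)"
    using h b1 xw Apos by (intro frac_le mult_left_mono mult_nonneg_nonneg) auto
  also have "\<dots> = 6 * \<eta> * \<bar>B\<bar> * (h / \<bar>A\<bar>)" using Apos by (simp add: field_simps)
  also have "\<dots> \<le> 6 * \<eta> * \<bar>B\<bar> * 2"
  proof -
    have "h / \<bar>A\<bar> \<le> 2" using h G Apos by (simp add: divide_le_eq)
    then show ?thesis using eta by (intro mult_left_mono) auto
  qed
  finally show ?thesis by simp
qed

lemma powr_div_powr_rescale:
  fixes e Y L Le \<alpha> m :: real
  assumes "e > 0" "Y > 0" "L > 0" "Le > 0" "\<alpha> > 0"
  shows "(e / (Y powr \<alpha> * L powr m)) powr (2 - 1/\<alpha>) * (Le / L) powr (m / \<alpha>)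
       = (e powr (2 - 1/\<alpha>) * Le powr (m / \<alpha>)) / (Y powr (2 * \<alpha> - 1) * L powr (2 * m))"
proof -
  have a: "(Y powr \<alpha> * L powr m) powr (2 - 1/\<alpha>) = Y powr (2 * \<alpha> - 1) * L powr (m * (2 - 1/\<alpha>))"
  proof -
    have e: "\<alpha> * (2 - 1/\<alpha>) = 2 * \<alpha> - 1" using assms by (simp add: field_simps)
    show ?thesis using assms by (simp add: powr_mult powr_powr e)
  qed
  have b: "L powr (m * (2 - 1/\<alpha>)) * L powr (m / \<alpha>) = L powr (2 * m)"
    using assms by (simp add: powr_add[symmetric] field_simps)
  define P1 where "P1 = e powr (2 - 1/\<alpha>)"
  define P2 where "P2 = Le powr (m / \<alpha>)"
  define P3 where "P3 = L powr (m / \<alpha>)"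
  define P4 where "P4 = L powr (m * (2 - 1/\<alpha>))"
  define P5 where "P5 = Y powr (2 * \<alpha> - 1)"
  have pos: "P3 > 0" "P4 > 0" "P5 > 0" using assms by (auto simp: P3_def P4_def P5_def)
  have "(e / (Y powr \<alpha> * L powr m)) powr (2 - 1/\<alpha>) * (Le / L) powr (m / \<alpha>) = P1 / (P5 * P4) * (P2 / P3)"
    using assms unfolding P1_def P2_def P3_def P4_def P5_def by (simp add: powr_divide a)
  also have "\<dots> = P1 * P2 / (P5 * (P4 * P3))" using pos by (simp add: field_simps)
  also have "\<dots> = (e powr (2 - 1/\<alpha>) * Le powr (m / \<alpha>)) / (Y powr (2 * \<alpha> - 1) * L powr (2 * m))"
    unfolding P1_def P2_def P3_def P4_def P5_def b ..
  finally show ?thesis .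
qed

lemma high_amp_oscI:
  fixes h :: "real \<Rightarrow> real" and s1 s2 :: "nat \<Rightarrow> real"
  assumes s1: "filterlim s1 (at_right 0) sequentially" and s2: "filterlim s2 (at_right 0) sequentially"
    and "\<forall>\<^sub>F n in sequentially. h (s1 n) \<le> A" and "\<forall>\<^sub>F n in sequentially. B \<le> h (s2 n)"
    and "A < B"
  shows "high_amp_osc h"
proof -
  have "\<forall>\<^sub>F n in sequentially. s1 n > 0" "\<forall>\<^sub>F n in sequentially. s2 n > 0"
    using s1 s2 unfolding filterlim_at by (auto elim: eventually_mono)
  then have "\<forall>\<^sub>F n in sequentially. s1 n > 0 \<and> s2 n > 0 \<and> h (s1 n) \<le> A \<and> B \<le> h (s2 n)"
    using assms(3,4) by eventually_elim auto
  then obtain N where N: "\<And>n. n \<ge> N \<Longrightarrow> s1 n > 0 \<and> s2 n > 0 \<and> h (s1 n) \<le> A \<and> B \<le> h (s2 n)"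
    unfolding eventually_sequentially by blast
  have lim: "(\<lambda>n. s1 (n + N)) \<longlonglongrightarrow> 0" "(\<lambda>n. s2 (n + N)) \<longlonglongrightarrow> 0"
    using s1 s2 unfolding filterlim_at by (auto intro: LIMSEQ_ignore_initial_segment)
  have shifted: "0 < s1 (n + N) \<and> 0 < s2 (n + N) \<and>
      h (s1 (n + N)) < (2 * A + B) / 3 \<and> (A + 2 * B) / 3 < h (s2 (n + N))" for n
    using N[of "n + N"] \<open>A < B\<close> by auto
  show ?thesis
    unfolding high_amp_osc_def
    by (rule exI[of _ "\<lambda>n. s1 (n + N)"], rule exI[of _ "\<lambda>n. s2 (n + N)"],
        rule exI[of _ "(2 * A + B) / 3"], rule exI[of _ "(A + 2 * B) / 3"])
      (use shifted lim \<open>A < B\<close> in auto)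
qed

lemma not_asymp_equiv_powr_ell:
  fixes h :: "real \<Rightarrow> real" and s1 s2 :: "nat \<Rightarrow> real"
  assumes s1: "filterlim s1 (at_right 0) sequentially" and s2: "filterlim s2 (at_right 0) sequentially"
    and zero: "\<forall>\<^sub>F n in sequentially. h (s1 n) = 0" and nonzero: "\<forall>\<^sub>F n in sequentially. h (s2 n) \<noteq> 0"
  shows "\<not> h \<sim>[at_right 0] (\<lambda>\<epsilon>. c * \<epsilon> powr \<beta> * ell \<epsilon> powr \<gamma>)"
proof
  assume "h \<sim>[at_right 0] (\<lambda>\<epsilon>. c * \<epsilon> powr \<beta> * ell \<epsilon> powr \<gamma>)"
  from asymp_equiv_eventually_zeros[OF this]
  have zeros: "\<forall>\<^sub>F \<epsilon> in at_right 0. h \<epsilon> = 0 \<longleftrightarrow> c * \<epsilon> powr \<beta> * ell \<epsilon> powr \<gamma> = 0" .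
  show False
  proof (cases "c = 0")
    case True
    then have "\<forall>\<^sub>F \<epsilon> in at_right 0. h \<epsilon> = 0" using zeros by simp
    from eventually_compose_filterlim[OF this s2] nonzero
    have "\<forall>\<^sub>F n in sequentially. False" by eventually_elim simp
    then show False by simp
  next
    case False
    have "\<forall>\<^sub>F \<epsilon> in at_right 0. h \<epsilon> \<noteq> 0"
      using zeros eventually_at_right_0_1
      by eventually_elim (use False ell_pos in force)
    from eventually_compose_filterlim[OF this s1] zero
    have "\<forall>\<^sub>F n in sequentially. False" by eventually_elim simp
    then show False by simp
  qed
qed

definition orbit_scale :: "real \<Rightarrow> int \<Rightarrow> real \<Rightarrow> real" where
  "orbit_scale \<alpha> m \<epsilon> = \<epsilon> powr (2 - 1 / \<alpha>) * ell \<epsilon> powr (of_int m / \<alpha>)"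

lemma orbit_scale_pos: "0 < \<epsilon> \<Longrightarrow> \<epsilon> < 1 \<Longrightarrow> orbit_scale \<alpha> m \<epsilon> > 0"
  unfolding orbit_scale_def using ell_pos[of \<epsilon>] by simp

section \<open>Asymptotics of the displacement and of the vector field\<close>

locale fatou_setting =
  fixes f \<xi> \<Psi> :: "real \<Rightarrow> real" and a \<alpha> d :: real and m :: int
  assumes parabolic: "parabolic_dulac_germ f"
    and a_pos: "a > 0" and alpha_gt: "\<alpha> > 1"
    and f_expansion: "(\<lambda>x. f x - (x - a * x powr \<alpha> * ell x powr of_int m))
           \<in> o[at_right 0](\<lambda>x. x powr \<alpha> * ell x powr of_int m)"
    and d_pos: "d > 0"
    and xi_analytic: "real_analytic_on \<xi> {0<..<d}"
    and xi_asymp: "\<xi> \<sim>[at_right 0] (\<lambda>x. - a * x powr \<alpha> * ell x powr of_int m)"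
    and deriv_xi_asymp: "(\<lambda>x. deriv \<xi> x) \<sim>[at_right 0] (\<lambda>x. - a * \<alpha> * x powr (\<alpha> - 1) * ell x powr of_int m)"
    and xi_remainder: "(\<lambda>x. \<xi> x + (x - f x) + \<xi> x * deriv \<xi> x / 2)
           \<in> o[at_right 0](\<lambda>x. x powr (2 * \<alpha> - 1) * ell x powr of_int (2 * m))"
    and Psi_deriv: "\<forall>x\<in>{0<..<d}. \<xi> x \<noteq> 0 \<and> (\<Psi> has_real_derivative 1 / \<xi> x) (at x)"
    and f_Fatou: "\<forall>x\<in>{0<..<d}. f x \<in> {0<..<d} \<and> \<Psi> (f x) = \<Psi> x + 1"
begin

definition "g x = x - f x"
definition "\<mu> x = x powr \<alpha> * ell x powr of_int m"
definition "W x = \<xi> x * deriv \<xi> x"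
definition "\<rho> x = x powr (2 * \<alpha> - 1) * ell x powr of_int (2 * m)"

lemma \<mu>_pos: "0 < x \<Longrightarrow> x < 1 \<Longrightarrow> \<mu> x > 0"
  unfolding \<mu>_def using ell_pos[of x] by simp

lemma rho_pos: "0 < x \<Longrightarrow> x < 1 \<Longrightarrow> \<rho> x > 0"
  unfolding \<rho>_def using ell_pos[of x] by simp

lemma g_equiv: "g \<sim>[at_right 0] (\<lambda>x. a * \<mu> x)"
proof (rule smallo_imp_asymp_equiv)
  have "(\<lambda>x. - (f x - (x - a * x powr \<alpha> * ell x powr of_int m))) \<in> o[at_right 0](\<lambda>x. a * \<mu> x)"
    using f_expansion a_pos unfolding \<mu>_def by (simp only: landau_o.small.uminus_in_iff landau_o.small.cmult)
  then show "(\<lambda>x. g x - a * \<mu> x) \<in> o[at_right 0](\<lambda>x. a * \<mu> x)"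
    unfolding g_def \<mu>_def by (simp add: algebra_simps)
qed

lemma xi_equiv: "\<xi> \<sim>[at_right 0] (\<lambda>x. - a * \<mu> x)"
  using xi_asymp unfolding \<mu>_def by (simp add: mult.assoc)

lemma g_equiv_xi: "g \<sim>[at_right 0] (\<lambda>x. - \<xi> x)"
proof -
  have "(\<lambda>x. - \<xi> x) \<sim>[at_right 0] (\<lambda>x. a * \<mu> x)"
    using asymp_equiv_uminus[OF xi_equiv] by simp
  then show ?thesis using g_equiv asymp_equiv_trans asymp_equiv_sym by metis
qed

lemma eventually_xi_neg: "\<forall>\<^sub>F x in at_right 0. \<xi> x < 0"
  using asymp_equiv_eventually_neg_iff[OF xi_equiv] eventually_at_right_0_1
  by eventually_elim (use a_pos \<mu>_pos in auto)

lemma eventually_deriv_xi_neg: "\<forall>\<^sub>F x in at_right 0. deriv \<xi> x < 0"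
  using asymp_equiv_eventually_neg_iff[OF deriv_xi_asymp] eventually_at_right_0_1
proof eventually_elim
  case (elim x)
  then have "ell x > 0" by (intro ell_pos) auto
  then have "0 < a * \<alpha> * x powr (\<alpha> - 1) * ell x powr real_of_int m"
    using a_pos alpha_gt elim by simp
  with elim show ?case by simp
qed

lemma eventually_g_pos: "\<forall>\<^sub>F x in at_right 0. g x > 0"
  using asymp_equiv_eventually_pos_iff[OF g_equiv] eventually_at_right_0_1
  by eventually_elim (use a_pos \<mu>_pos in auto)

lemma eventually_g_le_xi: "\<forall>\<^sub>F x in at_right 0. g x \<le> 2 * \<bar>\<xi> x\<bar>"
  using asymp_equiv_imp_eventually_le[OF g_equiv_xi, of 2, simplified] eventually_g_pos
  by eventually_elim auto

lemma \<mu>_over_x_tendsto_0: "((\<lambda>x. \<mu> x / x) \<longlongrightarrow> 0) (at_right 0)"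
  unfolding \<mu>_def ell_def using alpha_gt by real_asymp

lemma g_over_x_tendsto_0: "((\<lambda>x. g x / x) \<longlongrightarrow> 0) (at_right 0)"
proof -
  have "((\<lambda>x. g x / (a * \<mu> x)) \<longlongrightarrow> 1) (at_right 0)"
    by (rule asymp_equivD_strong[OF g_equiv]) (use eventually_at_right_0_1 in eventually_elim, use a_pos \<mu>_pos in force)
  then have "((\<lambda>x. g x / (a * \<mu> x) * (a * (\<mu> x / x))) \<longlongrightarrow> 1 * (a * 0)) (at_right 0)"
    by (intro tendsto_intros \<mu>_over_x_tendsto_0)
  then have "((\<lambda>x. g x / (a * \<mu> x) * (a * (\<mu> x / x))) \<longlongrightarrow> 0) (at_right 0)" by simp
  moreover have "\<forall>\<^sub>F x in at_right 0. g x / (a * \<mu> x) * (a * (\<mu> x / x)) = g x / x"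
    using eventually_at_right_0_1 proof eventually_elim
    case (elim x) with \<mu>_pos[of x] a_pos show ?case by (simp add: field_simps)
  qed
  ultimately show ?thesis by (rule Lim_transform_eventually)
qed

lemma f_over_x_tendsto_1: "((\<lambda>x. f x / x) \<longlongrightarrow> 1) (at_right 0)"
proof -
  have "((\<lambda>x. 1 - g x / x) \<longlongrightarrow> 1) (at_right 0)"
    using tendsto_diff[OF tendsto_const g_over_x_tendsto_0, of 1] by simp
  moreover have "\<forall>\<^sub>F x in at_right 0. 1 - g x / x = f x / x"
    using eventually_at_right_0_1 by eventually_elim (auto simp: g_def field_simps)
  ultimately show ?thesis by (rule Lim_transform_eventually)
qed

lemma f_analytic: "\<exists>d1>0. real_analytic_on f {0<..<d1}"
  using parabolic unfolding parabolic_dulac_germ_def dulac_germ_exp_def by blast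

lemma xi_DERIV: "x \<in> {0<..<d} \<Longrightarrow> (\<xi> has_real_derivative deriv \<xi> x) (at x)"
  using real_analytic_on_imp_DERIV[OF xi_analytic] .

lemma Psi_inj: "inj_on \<Psi> {0<..<d}"
  by (rule inj_on_if_DERIV_nonzero[where h' = "\<lambda>x. 1 / \<xi> x"]) (use Psi_deriv in auto)

lemma near_zero_radius_exists:
  "\<exists>\<delta>0>0. \<delta>0 \<le> d \<and> (\<forall>x\<in>{0<..<\<delta>0}. \<xi> x < 0 \<and> deriv \<xi> x < 0 \<and> g x > 0 \<and>
     (f has_real_derivative deriv f x) (at x))"
proof -
  obtain d1 where d1: "d1 > 0" "real_analytic_on f {0<..<d1}" using f_analytic by blast
  have "\<forall>\<^sub>F x in at_right 0. \<xi> x < 0 \<and> deriv \<xi> x < 0 \<and> g x > 0"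
    using eventually_xi_neg eventually_deriv_xi_neg eventually_g_pos by eventually_elim auto
  then obtain b where b: "b > 0" "\<forall>y>0. y < b \<longrightarrow> \<xi> y < 0 \<and> deriv \<xi> y < 0 \<and> g y > 0"
    unfolding eventually_at_right_field by auto
  define \<delta>0 where "\<delta>0 = min (min b d1) d"
  have "\<delta>0 > 0" using b d1 d_pos by (simp add: \<delta>0_def)
  moreover have "\<forall>x\<in>{0<..<\<delta>0}. \<xi> x < 0 \<and> deriv \<xi> x < 0 \<and> g x > 0 \<and>
      (f has_real_derivative deriv f x) (at x)"
    using b real_analytic_on_imp_DERIV[OF d1(2)] by (auto simp: \<delta>0_def)
  moreover have "\<delta>0 \<le> d" by (auto simp: \<delta>0_def)
  ultimately show ?thesis by blast
qed

lemma W_equiv: "W \<sim>[at_right 0] (\<lambda>x. a\<^sup>2 * \<alpha> * \<rho> x)"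
proof -
  have A: "(\<lambda>x. \<xi> x * deriv \<xi> x) \<sim>[at_right 0]
      (\<lambda>x. (- a * x powr \<alpha> * ell x powr of_int m) * (- a * \<alpha> * x powr (\<alpha> - 1) * ell x powr of_int m))"
    by (rule asymp_equiv_mult[OF xi_asymp deriv_xi_asymp])
  have B: "\<forall>\<^sub>F x in at_right 0. (- a * x powr \<alpha> * ell x powr of_int m) * (- a * \<alpha> * x powr (\<alpha> - 1) * ell x powr of_int m)
      = a\<^sup>2 * \<alpha> * \<rho> x"
    using eventually_at_right_0_1 proof eventually_elim
    case (elim x)
    have "x powr \<alpha> * x powr (\<alpha> - 1) = x powr (2 * \<alpha> - 1)" by (simp add: powr_add[symmetric])
    moreover have "ell x powr of_int m * ell x powr of_int m = ell x powr of_int (2 * m)"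
      by (simp add: powr_add[symmetric])
    ultimately show ?case unfolding \<rho>_def power2_eq_square
      by (simp add: algebra_simps)
  qed
  show ?thesis unfolding W_def[abs_def]
    by (rule asymp_equiv_transfer[OF A _ B]) simp
qed

lemma eventually_W_ge_rho: "\<forall>\<^sub>F x in at_right 0. W x \<ge> a\<^sup>2 * \<alpha> / 2 * \<rho> x"
  using asymp_equiv_imp_eventually_ge[OF W_equiv, of "1/2", simplified] eventually_at_right_0_1
    eventually_xi_neg eventually_deriv_xi_neg
proof eventually_elim
  case (elim x)
  have "W x > 0" unfolding W_def using elim by (simp add: mult_neg_neg)
  moreover have "\<rho> x > 0" using rho_pos elim by auto
  ultimately show ?case using elim a_pos alpha_gt by (simp add: abs_mult)
qed

lemma eventually_xi_remainder_small: assumes "e > 0"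
  shows "\<forall>\<^sub>F x in at_right 0. \<bar>\<xi> x + g x + W x / 2\<bar> \<le> e * W x"
proof -
  have c: "e * (a\<^sup>2 * \<alpha> / 2) > 0" using assms a_pos alpha_gt by simp
  have "\<forall>\<^sub>F x in at_right 0. norm (\<xi> x + (x - f x) + \<xi> x * deriv \<xi> x / 2) \<le> e * (a\<^sup>2 * \<alpha> / 2) * norm (\<rho> x)"
    using landau_o.smallD[OF xi_remainder c] unfolding \<rho>_def .
  then show ?thesis using eventually_W_ge_rho eventually_at_right_0_1
  proof eventually_elim
    case (elim x)
    have "\<rho> x > 0" using rho_pos elim by auto
    then have "\<bar>\<xi> x + g x + W x / 2\<bar> \<le> e * ((a\<^sup>2 * \<alpha> / 2) * \<rho> x)"
      using elim unfolding g_def W_def by (simp add: mult.assoc)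
    also have "\<dots> \<le> e * W x" using elim assms by (intro mult_left_mono) auto
    finally show ?case .
  qed
qed

lemma eventually_half_g_in_0_1: "\<forall>\<^sub>F y in at_right 0. 0 < g y / 2 \<and> g y / 2 < 1"
  using eventually_g_pos eventually_at_right_0_1 eventually_at_right_real[OF d_pos]
proof eventually_elim
  case (elim y)
  then have "f y > 0" using f_Fatou by auto
  then show ?case using elim by (auto simp: g_def)
qed

lemma W_div_orbit_scale_tendsto: "\<exists>L>0. ((\<lambda>y. W y / orbit_scale \<alpha> m (g y / 2)) \<longlongrightarrow> L) (at_right 0)"
proof -
  have half_g: "((\<lambda>y. (g y / 2) / \<mu> y) \<longlongrightarrow> a / 2) (at_right 0)"
  proof -
    have "((\<lambda>y. g y / (a * \<mu> y)) \<longlongrightarrow> 1) (at_right 0)"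
      by (rule asymp_equivD_strong[OF g_equiv])
        (use eventually_at_right_0_1 in eventually_elim, use a_pos \<mu>_pos in force)
    then have "((\<lambda>y. g y / (a * \<mu> y) * (a / 2)) \<longlongrightarrow> 1 * (a / 2)) (at_right 0)"
      by (intro tendsto_mult tendsto_const)
    then show ?thesis using a_pos by (simp add: ac_simps)
  qed
  have ell_half_g: "((\<lambda>y. ell (g y / 2) / ell y) \<longlongrightarrow> 1 / \<alpha>) (at_right 0)"
    by (rule ell_ratio_tendsto_if_powr_ell_ratio[OF half_g[unfolded \<mu>_def]])
      (use a_pos alpha_gt eventually_half_g_in_0_1 in auto)
  define L where "L = (a / 2) powr (2 - 1/\<alpha>) * (1 / \<alpha>) powr (of_int m / \<alpha>)"
  have "L > 0" using a_pos alpha_gt by (simp add: L_def)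
  have scale: "((\<lambda>y. orbit_scale \<alpha> m (g y / 2) / \<rho> y) \<longlongrightarrow> L) (at_right 0)"
  proof -
    have "((\<lambda>y. ((g y / 2) / \<mu> y) powr (2 - 1/\<alpha>) * (ell (g y / 2) / ell y) powr (of_int m / \<alpha>))
        \<longlongrightarrow> L) (at_right 0)"
      unfolding L_def by (intro tendsto_mult tendsto_powr half_g ell_half_g tendsto_const)
        (use a_pos alpha_gt in auto)
    moreover have "\<forall>\<^sub>F y in at_right 0.
        ((g y / 2) / \<mu> y) powr (2 - 1/\<alpha>) * (ell (g y / 2) / ell y) powr (of_int m / \<alpha>)
        = orbit_scale \<alpha> m (g y / 2) / \<rho> y"
      using eventually_at_right_0_1 eventually_half_g_in_0_1
    proof eventually_elim
      case (elim y)
      have "ell y > 0" "ell (g y / 2) > 0" using ell_pos elim by auto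
      then show ?case
        using powr_div_powr_rescale[of "g y / 2" y "ell y" "ell (g y / 2)" \<alpha> "of_int m"] elim alpha_gt
        unfolding \<mu>_def orbit_scale_def \<rho>_def by simp
    qed
    ultimately show ?thesis by (simp add: Lim_transform_eventually)
  qed
  have W_rho: "((\<lambda>y. W y / \<rho> y) \<longlongrightarrow> a\<^sup>2 * \<alpha>) (at_right 0)"
  proof -
    have "((\<lambda>y. W y / (a\<^sup>2 * \<alpha> * \<rho> y)) \<longlongrightarrow> 1) (at_right 0)"
      by (rule asymp_equivD_strong[OF W_equiv])
        (use eventually_at_right_0_1 in eventually_elim, use a_pos alpha_gt rho_pos in force)
    then have "((\<lambda>y. W y / (a\<^sup>2 * \<alpha> * \<rho> y) * (a\<^sup>2 * \<alpha>)) \<longlongrightarrow> 1 * (a\<^sup>2 * \<alpha>)) (at_right 0)"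
      by (intro tendsto_mult tendsto_const)
    then show ?thesis using a_pos alpha_gt by simp
  qed
  have "((\<lambda>y. (W y / \<rho> y) / (orbit_scale \<alpha> m (g y / 2) / \<rho> y)) \<longlongrightarrow> a\<^sup>2 * \<alpha> / L) (at_right 0)"
    by (intro tendsto_divide scale W_rho) (use \<open>L > 0\<close> in simp)
  moreover have "\<forall>\<^sub>F y in at_right 0.
      (W y / \<rho> y) / (orbit_scale \<alpha> m (g y / 2) / \<rho> y) = W y / orbit_scale \<alpha> m (g y / 2)"
    using eventually_at_right_0_1 by eventually_elim (use rho_pos in force)
  ultimately have "((\<lambda>y. W y / orbit_scale \<alpha> m (g y / 2)) \<longlongrightarrow> a\<^sup>2 * \<alpha> / L) (at_right 0)"
    by (simp add: Lim_transform_eventually)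
  moreover have "a\<^sup>2 * \<alpha> / L > 0" using a_pos alpha_gt \<open>L > 0\<close> by simp
  ultimately show ?thesis by blast
qed

lemma W_orbit_scale_bounds:
  "\<exists>c1>0. \<exists>c2>0. \<forall>\<^sub>F y in at_right 0.
     c1 * orbit_scale \<alpha> m (g y / 2) \<le> W y \<and> W y \<le> c2 * orbit_scale \<alpha> m (g y / 2)"
proof -
  obtain L where L: "L > 0" "((\<lambda>y. W y / orbit_scale \<alpha> m (g y / 2)) \<longlongrightarrow> L) (at_right 0)"
    using W_div_orbit_scale_tendsto by blast
  have "\<forall>\<^sub>F y in at_right 0. dist (W y / orbit_scale \<alpha> m (g y / 2)) L < L / 2"
    using L by (intro tendstoD) auto
  then have "\<forall>\<^sub>F y in at_right 0.
      L / 2 * orbit_scale \<alpha> m (g y / 2) \<le> W y \<and> W y \<le> (3 * L / 2) * orbit_scale \<alpha> m (g y / 2)"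
    using eventually_half_g_in_0_1
  proof eventually_elim
    case (elim y)
    have dp: "orbit_scale \<alpha> m (g y / 2) > 0" using orbit_scale_pos elim by auto
    have ab: "\<bar>W y / orbit_scale \<alpha> m (g y / 2) - L\<bar> < L / 2" using elim by (simp add: dist_real_def)
    have "L / 2 \<le> W y / orbit_scale \<alpha> m (g y / 2)" "W y / orbit_scale \<alpha> m (g y / 2) \<le> 3 * L / 2"
      using ab[unfolded abs_less_iff] by linarith+
    then show ?case using dp by (simp add: field_simps)
  qed
  moreover have "L / 2 > 0" "3 * L / 2 > 0" using L by auto
  ultimately show ?thesis by blast
qed

end

section \<open>Second-order expansion of the flow\<close>

locale fatou_near_zero = fatou_setting +
  fixes \<delta>0 :: real
  assumes near_zero_pos: "\<delta>0 > 0" and near_zero_le: "\<delta>0 \<le> d"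
    and near_zero_signs: "\<forall>x\<in>{0<..<\<delta>0}. \<xi> x < 0 \<and> deriv \<xi> x < 0 \<and> g x > 0 \<and>
       (f has_real_derivative deriv f x) (at x)"
begin

lemma in_domain: "x \<in> {0<..<\<delta>0} \<Longrightarrow> x \<in> {0<..<d}" using near_zero_le by auto

lemma xi_neg: "x \<in> {0<..<\<delta>0} \<Longrightarrow> \<xi> x < 0" using near_zero_signs by auto
lemma deriv_xi_neg: "x \<in> {0<..<\<delta>0} \<Longrightarrow> deriv \<xi> x < 0" using near_zero_signs by auto
lemma g_pos: "x \<in> {0<..<\<delta>0} \<Longrightarrow> g x > 0" using near_zero_signs by auto
lemma f_DERIV: "x \<in> {0<..<\<delta>0} \<Longrightarrow> (f has_real_derivative deriv f x) (at x)" using near_zero_signs by auto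

lemma f_maps_to: "x \<in> {0<..<\<delta>0} \<Longrightarrow> f x \<in> {0<..<\<delta>0} \<and> f x < x"
  using g_pos[of x] f_Fatou in_domain[of x] by (auto simp: g_def)

lemma Psi_DERIV: "x \<in> {0<..<\<delta>0} \<Longrightarrow> (\<Psi> has_real_derivative 1 / \<xi> x) (at x)"
  using Psi_deriv in_domain by auto

lemma Psi_decreasing: assumes "x \<in> {0<..<\<delta>0}" "y \<in> {0<..<\<delta>0}" "x < y" shows "\<Psi> y < \<Psi> x"
proof (rule DERIV_neg_imp_decreasing[OF assms(3)])
  fix z assume "x \<le> z" "z \<le> y"
  then have z: "z \<in> {0<..<\<delta>0}" using assms by auto
  show "\<exists>y. (\<Psi> has_real_derivative y) (at z) \<and> y < 0"
    using Psi_DERIV[OF z] xi_neg[OF z] by (auto intro!: exI[of _ "1 / \<xi> z"])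
qed

lemma Psi_le_iff: "x \<in> {0<..<\<delta>0} \<Longrightarrow> y \<in> {0<..<\<delta>0} \<Longrightarrow> \<Psi> x \<le> \<Psi> y \<longleftrightarrow> y \<le> x"
  using Psi_decreasing[of x y] Psi_decreasing[of y x] by (cases x y rule: linorder_cases) auto

lemma xi_decreasing: assumes "x \<in> {0<..<\<delta>0}" "y \<in> {0<..<\<delta>0}" "x < y" shows "\<xi> y < \<xi> x"
proof (rule DERIV_neg_imp_decreasing[OF assms(3)])
  fix z assume "x \<le> z" "z \<le> y"
  then have z: "z \<in> {0<..<\<delta>0}" using assms by auto
  show "\<exists>y. (\<xi> has_real_derivative y) (at z) \<and> y < 0"
    using xi_DERIV[OF in_domain[OF z]] deriv_xi_neg[OF z] by blast
qed

lemma g_DERIV_pos: assumes x: "x \<in> {0<..<\<delta>0}"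
  shows "\<exists>D. (g has_real_derivative D) (at x) \<and> D > 0"
proof -
  have fx: "f x \<in> {0<..<\<delta>0}" "f x < x" using f_maps_to[OF x] by auto
  have d1: "((\<lambda>y. \<Psi> (f y)) has_real_derivative 1 / \<xi> (f x) * deriv f x) (at x)"
    using DERIV_chain2[OF Psi_DERIV[OF fx(1)] f_DERIV[OF x]] by simp
  have "((\<lambda>y. \<Psi> y + 1) has_real_derivative 1 / \<xi> x) (at x)"
    using Psi_DERIV[OF x] by (auto intro!: derivative_eq_intros)
  then have d2: "((\<lambda>y. \<Psi> (f y)) has_real_derivative 1 / \<xi> x) (at x)"
    by (rule has_field_derivative_transform_within_open[where S = "{0<..<d}"])
       (use x in_domain f_Fatou in auto)
  have eq: "1 / \<xi> (f x) * deriv f x = 1 / \<xi> x" using DERIV_unique[OF d1 d2] .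
  have xn: "\<xi> x < 0" "\<xi> (f x) < 0" using xi_neg x fx by auto
  have "\<xi> x < \<xi> (f x)" using xi_decreasing[OF fx(1) x fx(2)] .
  have df: "deriv f x = \<xi> (f x) / \<xi> x" using eq xn by (simp add: field_simps)
  have "deriv f x < 1" unfolding df using xn \<open>\<xi> x < \<xi> (f x)\<close> by (simp add: divide_less_eq)
  moreover have "(g has_real_derivative 1 - deriv f x) (at x)"
    unfolding g_def[abs_def] using f_DERIV[OF x] by (auto intro!: derivative_eq_intros)
  ultimately show ?thesis by auto
qed

lemma g_less: assumes "x \<in> {0<..<\<delta>0}" "y \<in> {0<..<\<delta>0}" "x < y" shows "g x < g y"
proof (rule DERIV_pos_imp_increasing[OF assms(3)])
  fix z assume "x \<le> z" "z \<le> y"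
  then have z: "z \<in> {0<..<\<delta>0}" using assms by auto
  show "\<exists>y. (g has_real_derivative y) (at z) \<and> y > 0" using g_DERIV_pos[OF z] .
qed

lemma g_le_iff: "x \<in> {0<..<\<delta>0} \<Longrightarrow> y \<in> {0<..<\<delta>0} \<Longrightarrow> g x \<le> g y \<longleftrightarrow> x \<le> y"
  using g_less[of x y] g_less[of y x] by (cases x y rule: linorder_cases) auto

lemma isCont_g: "x \<in> {0<..<\<delta>0} \<Longrightarrow> isCont g x"
  using g_DERIV_pos DERIV_isCont by blast

lemma isCont_Psi: "x \<in> {0<..<\<delta>0} \<Longrightarrow> isCont \<Psi> x"
  using Psi_DERIV DERIV_isCont by blast

lemma W_pos: "y \<in> {0<..<\<delta>0} \<Longrightarrow> W y > 0"
  unfolding W_def using xi_neg deriv_xi_neg by (simp add: mult_neg_neg)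

lemma flow_second_order_estimate:
  assumes y: "y \<in> {0<..<\<delta>0}" and eta: "0 \<le> \<eta>" "\<eta> \<le> 1/2"
    and hu: "\<forall>\<theta>\<in>{f y..y}. \<bar>\<xi> \<theta> / \<xi> y - 1\<bar> \<le> \<eta>"
    and hv: "\<forall>\<theta>\<in>{f y..y}. \<bar>deriv \<xi> \<theta> / deriv \<xi> y - 1\<bar> \<le> \<eta>"
    and hg: "g y \<le> 2 * \<bar>\<xi> y\<bar>" and z: "z \<in> {f y..y}"
  shows "\<bar>z - y - (\<Psi> z - \<Psi> y) * \<xi> y - (\<Psi> z - \<Psi> y)\<^sup>2 * W y / 2\<bar> \<le> 24 * \<eta> * W y"
proof (cases "z = y")
  case True then show ?thesis using W_pos[OF y] eta by simp
next
  case False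
  have fy: "f y \<in> {0<..<\<delta>0}" "f y < y" using f_maps_to[OF y] by auto
  have zy: "z < y" "f y \<le> z" using z False by auto
  have inI: "w \<in> {0<..<\<delta>0}" if "f y \<le> w" "w \<le> y" for w using that fy y by auto
  define E where "E w = w - y - (\<Psi> w - \<Psi> y) * \<xi> y - (\<Psi> w - \<Psi> y)\<^sup>2 * W y / 2" for w
  define E' where "E' w = (\<xi> w - \<xi> y - (\<Psi> w - \<Psi> y) * W y) / \<xi> w" for w
  \<comment> \<open>\<open>E y = 0\<close>, and by the mean value theorem \<open>E'\<close> is \<open>O(\<eta> \<xi>' y)\<close> on \<open>[f y, y]\<close>.\<close>
  have dE: "(E has_real_derivative E' w) (at w)" if "w \<in> {0<..<\<delta>0}" for w
  proof -
    have "\<xi> w \<noteq> 0" using xi_neg[OF that] by simp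
    then show ?thesis unfolding E_def[abs_def] E'_def
      by (auto intro!: derivative_eq_intros Psi_DERIV[OF that] simp: power2_eq_square field_simps)
  qed
  obtain w0 where w0: "z < w0" "w0 < y" "E y - E z = (y - z) * E' w0"
    using MVT2[OF zy(1), of E E'] dE inI zy by force
  have w0in: "w0 \<in> {0<..<\<delta>0}" using inI[of w0] w0 zy by auto
  obtain t2 where t2: "w0 < t2" "t2 < y" "\<Psi> y - \<Psi> w0 = (y - w0) * (1 / \<xi> t2)"
    using MVT2[OF w0(2), of \<Psi> "\<lambda>x. 1 / \<xi> x"] Psi_DERIV inI w0 zy by force
  obtain t1 where t1: "w0 < t1" "t1 < y" "\<xi> y - \<xi> w0 = (y - w0) * deriv \<xi> t1"
    using MVT2[OF w0(2), of \<xi> "deriv \<xi>"] xi_DERIV inI in_domain w0 zy by force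
  have "\<xi> w0 - \<xi> y - (\<Psi> w0 - \<Psi> y) * W y = - (y - w0) * deriv \<xi> t1 + (y - w0) / \<xi> t2 * (\<xi> y * deriv \<xi> y)"
    using t1(3) t2(3) unfolding W_def by (simp add: field_simps)
  then have E'eq: "E' w0 = (- (y - w0) * deriv \<xi> t1 + (y - w0) / \<xi> t2 * (\<xi> y * deriv \<xi> y)) / \<xi> w0"
    unfolding E'_def by simp
  have bE': "\<bar>E' w0\<bar> \<le> 12 * \<eta> * \<bar>deriv \<xi> y\<bar>"
    unfolding E'eq
  proof (rule perturbed_quotient_bound[where G = "g y"])
    show "\<xi> y < 0" "deriv \<xi> y < 0" using xi_neg[OF y] deriv_xi_neg[OF y] .
    show "\<bar>\<xi> t2 / \<xi> y - 1\<bar> \<le> \<eta>" using hu t2 w0 zy by auto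
    show "\<bar>deriv \<xi> t1 / deriv \<xi> y - 1\<bar> \<le> \<eta>" using hv t1 w0 zy by auto
    show "\<bar>\<xi> w0 / \<xi> y - 1\<bar> \<le> \<eta>" using hu w0 zy by auto
    show "y - w0 \<le> g y" using w0 zy unfolding g_def by auto
  qed (use eta hg w0 in auto)
  have "E y = 0" by (simp add: E_def)
  then have "E z = - ((y - z) * E' w0)" using w0(3) by simp
  then have "\<bar>E z\<bar> = (y - z) * \<bar>E' w0\<bar>" using zy by (simp add: abs_mult)
  also have "\<dots> \<le> (y - z) * (12 * \<eta> * \<bar>deriv \<xi> y\<bar>)"
    using bE' zy by (intro mult_left_mono) auto
  also have "\<dots> \<le> (2 * \<bar>\<xi> y\<bar>) * (12 * \<eta> * \<bar>deriv \<xi> y\<bar>)"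
  proof -
    have "y - z \<le> g y" using zy unfolding g_def by auto
    then show ?thesis using hg eta by (intro mult_right_mono) auto
  qed
  also have "\<dots> = 24 * \<eta> * W y"
    using xi_neg[OF y] deriv_xi_neg[OF y] unfolding W_def by (simp add: abs_mult)
  finally show ?thesis unfolding E_def .
qed

lemma eventually_f_between: "\<forall>\<^sub>F y in at_right 0. 0 < f y \<and> f y \<le> y"
  using eventually_at_right_real[OF near_zero_pos] by eventually_elim (use f_maps_to in force)

lemma gap_second_order_estimate:
  assumes y: "y \<in> {0<..<\<delta>0}" and \<eta>: "0 \<le> \<eta>" "\<eta> \<le> 1/2"
    and hu: "\<forall>\<theta>\<in>{f y..y}. \<bar>\<xi> \<theta> / \<xi> y - 1\<bar> \<le> \<eta>"
    and hv: "\<forall>\<theta>\<in>{f y..y}. \<bar>deriv \<xi> \<theta> / deriv \<xi> y - 1\<bar> \<le> \<eta>"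
    and hg: "g y \<le> 2 * \<bar>\<xi> y\<bar>" and rem: "\<bar>\<xi> y + g y + W y / 2\<bar> \<le> \<eta>' * W y"
    and z: "z \<in> {f y..y}"
  shows "\<bar>y - z - g y * (\<Psi> z - \<Psi> y) - (\<Psi> z - \<Psi> y) * (1 - (\<Psi> z - \<Psi> y)) * W y / 2\<bar>
    \<le> (24 * \<eta> + \<eta>') * W y"
proof -
  define t where "t = \<Psi> z - \<Psi> y"
  define r where "r = \<xi> y + g y + W y / 2"
  have flow: "\<bar>z - y - t * \<xi> y - t\<^sup>2 * W y / 2\<bar> \<le> 24 * \<eta> * W y"
    using flow_second_order_estimate[OF y \<eta> hu hv hg z] unfolding t_def by simp
  have fy: "f y \<in> {0<..<\<delta>0}" using f_maps_to[OF y] by auto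
  have zin: "z \<in> {0<..<\<delta>0}" using z fy y by auto
  have "0 \<le> t" using Psi_le_iff[OF y zin] z by (auto simp: t_def)
  moreover have "t \<le> 1"
    using Psi_le_iff[OF zin fy] z f_Fatou in_domain[OF y] by (auto simp: t_def)
  ultimately have "\<bar>t * r\<bar> \<le> \<bar>r\<bar>" by (simp add: abs_mult mult_left_le_one_le)
  moreover have "y - z - g y * t - t * (1 - t) * W y / 2 = - (z - y - t * \<xi> y - t\<^sup>2 * W y / 2) - t * r"
    unfolding r_def by (simp add: field_simps power2_eq_square)
  ultimately show ?thesis
    using flow rem unfolding t_def[symmetric] r_def[symmetric] by (simp add: algebra_simps)
qed

lemma eventually_gap_second_order_estimate:
  assumes \<eta>: "\<eta> > 0"
  shows "\<forall>\<^sub>F y in at_right 0. \<forall>z\<in>{f y..y}.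
     \<bar>y - z - g y * (\<Psi> z - \<Psi> y) - (\<Psi> z - \<Psi> y) * (1 - (\<Psi> z - \<Psi> y)) * W y / 2\<bar> \<le> \<eta> * W y"
proof -
  define \<eta>1 where "\<eta>1 = min (1/2) (\<eta> / 48)"
  have \<eta>1: "0 \<le> \<eta>1" "\<eta>1 \<le> 1/2" "24 * \<eta>1 + \<eta> / 2 \<le> \<eta>" "\<eta>1 > 0" using \<eta> by (auto simp: \<eta>1_def)
  have xi_asymp': "\<xi> \<sim>[at_right 0] (\<lambda>x. (- a) * x powr \<alpha> * ell x powr of_int m)"
    using xi_asymp by simp
  have deriv_xi_asymp': "deriv \<xi> \<sim>[at_right 0] (\<lambda>x. (- a * \<alpha>) * x powr (\<alpha> - 1) * ell x powr of_int m)"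
    using deriv_xi_asymp by simp
  have "\<forall>\<^sub>F y in at_right 0. \<forall>\<theta>\<in>{f y..y}. \<bar>\<xi> \<theta> / \<xi> y - 1\<bar> \<le> \<eta>1"
    by (rule asymp_equiv_powr_ell_ratio_uniform[OF xi_asymp' _ f_over_x_tendsto_1
          eventually_f_between \<eta>1(4)]) (use a_pos in simp)
  moreover have "\<forall>\<^sub>F y in at_right 0. \<forall>\<theta>\<in>{f y..y}. \<bar>deriv \<xi> \<theta> / deriv \<xi> y - 1\<bar> \<le> \<eta>1"
    by (rule asymp_equiv_powr_ell_ratio_uniform[OF deriv_xi_asymp' _ f_over_x_tendsto_1
          eventually_f_between \<eta>1(4)]) (use a_pos alpha_gt in simp)
  moreover have "\<forall>\<^sub>F y in at_right 0. \<bar>\<xi> y + g y + W y / 2\<bar> \<le> \<eta> / 2 * W y"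
    using eventually_xi_remainder_small[of "\<eta> / 2"] \<eta> by simp
  ultimately show ?thesis
    using eventually_g_le_xi eventually_at_right_real[OF near_zero_pos]
  proof eventually_elim
    case (elim y)
    show ?case
    proof
      fix z assume "z \<in> {f y..y}"
      from gap_second_order_estimate[OF _ \<eta>1(1,2) _ _ _ _ this] elim
      have "\<bar>y - z - g y * (\<Psi> z - \<Psi> y) - (\<Psi> z - \<Psi> y) * (1 - (\<Psi> z - \<Psi> y)) * W y / 2\<bar>
          \<le> (24 * \<eta>1 + \<eta> / 2) * W y" by auto
      also have "\<dots> \<le> \<eta> * W y" using \<eta>1(3) W_pos[of y] elim by (intro mult_right_mono) auto
      finally show "\<bar>y - z - g y * (\<Psi> z - \<Psi> y) - (\<Psi> z - \<Psi> y) * (1 - (\<Psi> z - \<Psi> y)) * W y / 2\<bar>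
          \<le> \<eta> * W y" .
    qed
  qed
qed

lemma half_g_tendsto_at_right:
  assumes s: "\<And>n. s n \<in> {0<..<\<delta>0}" and lim: "s \<longlonglongrightarrow> 0"
  shows "filterlim (\<lambda>n. g (s n) / 2) (at_right 0) sequentially"
  unfolding filterlim_at
proof
  show "\<forall>\<^sub>F n in sequentially. g (s n) / 2 \<in> {0<..} \<and> g (s n) / 2 \<noteq> 0"
  proof (intro always_eventually allI)
    fix n show "g (s n) / 2 \<in> {0<..} \<and> g (s n) / 2 \<noteq> 0" using g_pos[OF s[of n]] by simp
  qed
  show "((\<lambda>n. g (s n) / 2) \<longlongrightarrow> 0) sequentially"
  proof (rule tendsto_sandwich[OF _ _ tendsto_const lim])
    show "\<forall>\<^sub>F n in sequentially. 0 \<le> g (s n) / 2"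
      using g_pos[OF s] by (intro always_eventually) (simp add: less_imp_le)
    show "\<forall>\<^sub>F n in sequentially. g (s n) / 2 \<le> s n"
    proof (intro always_eventually allI)
      fix n show "g (s n) / 2 \<le> s n" using s[of n] f_maps_to[OF s[of n]] by (auto simp: g_def)
    qed
  qed
qed

end

section \<open>Critical times and the difference of the lengths\<close>

locale fatou_orbit = fatou_near_zero +
  fixes x0 :: real
  assumes x0: "x0 \<in> {0<..<\<delta>0}"
begin

definition "length_diff \<epsilon> = cont_length \<Psi> d x0 \<epsilon> - disc_length f x0 \<epsilon>"

definition "time_gap y = of_int \<lceil>\<Psi> y - \<Psi> x0\<rceil> - (\<Psi> y - \<Psi> x0)"

lemma time_gap_bounds: "0 \<le> time_gap y" "time_gap y < 1"
  unfolding time_gap_def by linarith+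

lemma orbit_mem: "(f ^^ n) x0 \<in> {0<..<\<delta>0}" and Psi_orbit: "\<Psi> ((f ^^ n) x0) = \<Psi> x0 + real n"
proof (induction n)
  case 0 show "(f ^^ 0) x0 \<in> {0<..<\<delta>0}" "\<Psi> ((f ^^ 0) x0) = \<Psi> x0 + real 0" using x0 by simp_all
next
  case (Suc n)
  then show "(f ^^ Suc n) x0 \<in> {0<..<\<delta>0}" "\<Psi> ((f ^^ Suc n) x0) = \<Psi> x0 + real (Suc n)"
    using f_maps_to f_Fatou in_domain by auto
qed

lemma orbit_le_iff: "(f ^^ n) x0 \<le> (f ^^ k) x0 \<longleftrightarrow> k \<le> n"
  using Psi_le_iff[OF orbit_mem orbit_mem, of k n] Psi_orbit[of n] Psi_orbit[of k] by auto

lemma orbit_tendsto_0: "(\<lambda>n. (f ^^ n) x0) \<longlonglongrightarrow> 0"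
proof (rule order_tendstoI)
  fix a :: real assume "a < 0"
  then show "\<forall>\<^sub>F n in sequentially. a < (f ^^ n) x0"
    using orbit_mem by (intro always_eventually) (auto intro: less_trans)
next
  fix r :: real assume r: "0 < r"
  obtain N where N: "(f ^^ N) x0 < r"
  proof (rule ccontr)
    assume "\<not> thesis"
    then have ge: "r \<le> (f ^^ N) x0" for N using that by (meson not_le)
    then have r_in: "r \<in> {0<..<\<delta>0}" using r ge[of 0] x0 by auto
    obtain N :: nat where "real N > \<Psi> r - \<Psi> x0" using reals_Archimedean2 by blast
    moreover have "\<Psi> ((f ^^ N) x0) \<le> \<Psi> r" using Psi_le_iff[OF orbit_mem r_in] ge by blast
    ultimately show False using Psi_orbit[of N] by simp
  qed
  show "\<forall>\<^sub>F n in sequentially. (f ^^ n) x0 < r"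
    using N orbit_le_iff[of _ N] by (intro eventually_sequentiallyI[of N]) (meson le_less_trans)
qed

lemma flow_eq:
  assumes "y \<in> {0<..<\<delta>0}" "\<Psi> y = \<Psi> x0 + t"
  shows "flow \<Psi> d t x0 = y"
  unfolding flow_def
proof (rule the_equality)
  show "y \<in> {0<..<d} \<and> \<Psi> y = \<Psi> x0 + t" using assms in_domain by auto
  fix y' assume "y' \<in> {0<..<d} \<and> \<Psi> y' = \<Psi> x0 + t"
  then show "y' = y" using inj_onD[OF Psi_inj, of y' y] assms in_domain by auto
qed

lemma flow_mem:
  assumes t: "t \<ge> 0"
  shows "flow \<Psi> d t x0 \<in> {0<..x0}" "\<Psi> (flow \<Psi> d t x0) = \<Psi> x0 + t"
    and "flow \<Psi> d (t + 1) x0 = f (flow \<Psi> d t x0)"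
proof -
  obtain N :: nat where N: "real N > t" using reals_Archimedean2 by blast
  let ?a = "(f ^^ N) x0"
  have "\<exists>y. ?a \<le> y \<and> y \<le> x0 \<and> \<Psi> y = \<Psi> x0 + t"
  proof (rule IVT2')
    show "\<Psi> x0 \<le> \<Psi> x0 + t" "\<Psi> x0 + t \<le> \<Psi> ?a" using t N Psi_orbit[of N] by auto
    show "?a \<le> x0" using orbit_le_iff[of N 0] by simp
    show "continuous_on {?a..x0} \<Psi>"
      using orbit_mem[of N] x0 by (intro continuous_at_imp_continuous_on ballI isCont_Psi) auto
  qed
  then obtain y where y: "?a \<le> y" "y \<le> x0" "\<Psi> y = \<Psi> x0 + t" by blast
  have y_in: "y \<in> {0<..<\<delta>0}" using y orbit_mem[of N] x0 by auto
  have "flow \<Psi> d t x0 = y" using flow_eq[OF y_in y(3)] .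
  moreover have "flow \<Psi> d (t + 1) x0 = f y"
    using flow_eq f_maps_to[OF y_in] f_Fatou in_domain[OF y_in] y(3) by simp
  ultimately show "flow \<Psi> d t x0 \<in> {0<..x0}" "\<Psi> (flow \<Psi> d t x0) = \<Psi> x0 + t"
    "flow \<Psi> d (t + 1) x0 = f (flow \<Psi> d t x0)"
    using y y_in by auto
qed

lemma crit_point_exists:
  assumes "0 < \<epsilon>" "2 * \<epsilon> < g x0"
  shows "\<exists>y\<in>{0<..<x0}. g y = 2 * \<epsilon>"
proof -
  have "\<forall>\<^sub>F n in sequentially. (f ^^ n) x0 < 2 * \<epsilon>"
    using order_tendstoD(2)[OF orbit_tendsto_0] assms(1) by simp
  then obtain N where N: "(f ^^ N) x0 < 2 * \<epsilon>"
    unfolding eventually_sequentially by blast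
  let ?a = "(f ^^ N) x0"
  have "\<exists>y. ?a \<le> y \<and> y \<le> x0 \<and> g y = 2 * \<epsilon>"
  proof (rule IVT')
    show "g ?a \<le> 2 * \<epsilon>" using f_maps_to[OF orbit_mem, of N] N unfolding g_def by auto
    show "2 * \<epsilon> \<le> g x0" using assms by simp
    show "?a \<le> x0" using orbit_le_iff[of N 0] by simp
    show "continuous_on {?a..x0} g"
      using orbit_mem[of N] x0 by (intro continuous_at_imp_continuous_on ballI isCont_g) auto
  qed
  then obtain y where "?a \<le> y" "y \<le> x0" "g y = 2 * \<epsilon>" by blast
  moreover have "y \<noteq> x0" using \<open>g y = 2 * \<epsilon>\<close> assms(2) by auto
  ultimately show ?thesis using orbit_mem[of N] by auto
qed

lemma cont_crit_eq:
  assumes y: "y \<in> {0<..<x0}" and gy: "g y = 2 * \<epsilon>"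
  shows "cont_crit \<Psi> d x0 \<epsilon> = \<Psi> y - \<Psi> x0"
  unfolding cont_crit_def
proof (rule the_equality)
  have y_in: "y \<in> {0<..<\<delta>0}" using y x0 by auto
  have flow_y: "flow \<Psi> d (\<Psi> y - \<Psi> x0) x0 = y" by (rule flow_eq[OF y_in]) simp
  have "0 \<le> \<Psi> y - \<Psi> x0" using Psi_le_iff[OF x0 y_in] y by simp
  with flow_mem(3)[OF this] flow_y gy
  show "0 \<le> \<Psi> y - \<Psi> x0 \<and> flow \<Psi> d (\<Psi> y - \<Psi> x0) x0 - flow \<Psi> d (\<Psi> y - \<Psi> x0 + 1) x0 = 2 * \<epsilon>"
    by (simp add: g_def)
  fix t assume t: "0 \<le> t \<and> flow \<Psi> d t x0 - flow \<Psi> d (t + 1) x0 = 2 * \<epsilon>"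
  define y' where "y' = flow \<Psi> d t x0"
  have y'_in: "y' \<in> {0<..<\<delta>0}" using flow_mem(1)[of t] t x0 by (auto simp: y'_def)
  have "g y' = g y" using flow_mem(3)[of t] t gy by (simp add: g_def y'_def)
  then have "y' = y" using g_le_iff[OF y'_in y_in] g_le_iff[OF y_in y'_in] by auto
  then show "t = \<Psi> y - \<Psi> x0" using flow_mem(2)[of t] t by (simp add: y'_def)
qed

lemma disc_crit_eq:
  assumes y: "y \<in> {0<..<x0}" and gy: "g y = 2 * \<epsilon>"
  shows "disc_crit f x0 \<epsilon> = nat \<lceil>\<Psi> y - \<Psi> x0\<rceil>"
proof -
  define \<tau> where "\<tau> = \<Psi> y - \<Psi> x0"
  have y_in: "y \<in> {0<..<\<delta>0}" using y x0 by auto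
  have "\<tau> > 0" using Psi_decreasing[OF y_in x0] y by (simp add: \<tau>_def)
  have step_le_iff: "(f ^^ k) x0 - (f ^^ Suc k) x0 \<le> 2 * \<epsilon> \<longleftrightarrow> \<tau> \<le> real k" for k
  proof -
    have "(f ^^ k) x0 - (f ^^ Suc k) x0 \<le> 2 * \<epsilon> \<longleftrightarrow> g ((f ^^ k) x0) \<le> g y"
      using gy by (simp add: g_def)
    also have "\<dots> \<longleftrightarrow> (f ^^ k) x0 \<le> y" using g_le_iff[OF orbit_mem y_in] .
    also have "\<dots> \<longleftrightarrow> \<Psi> y \<le> \<Psi> ((f ^^ k) x0)" using Psi_le_iff[OF y_in orbit_mem] by simp
    also have "\<dots> \<longleftrightarrow> \<tau> \<le> real k" using Psi_orbit[of k] by (auto simp: \<tau>_def)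
    finally show ?thesis .
  qed
  have crit_iff: "(k \<ge> 1 \<and> (f ^^ k) x0 - (f ^^ Suc k) x0 \<le> 2 * \<epsilon> \<and>
      2 * \<epsilon> < (f ^^ (k - 1)) x0 - (f ^^ k) x0) \<longleftrightarrow> (k \<ge> 1 \<and> \<tau> \<le> real k \<and> real k - 1 < \<tau>)" for k
    using step_le_iff[of k] step_le_iff[of "k - 1"] by (cases k) auto
  show ?thesis
    unfolding disc_crit_def \<tau>_def[symmetric]
  proof (rule the_equality)
    show "nat \<lceil>\<tau>\<rceil> \<ge> 1 \<and> (f ^^ nat \<lceil>\<tau>\<rceil>) x0 - (f ^^ Suc (nat \<lceil>\<tau>\<rceil>)) x0 \<le> 2 * \<epsilon> \<and>
        2 * \<epsilon> < (f ^^ (nat \<lceil>\<tau>\<rceil> - 1)) x0 - (f ^^ nat \<lceil>\<tau>\<rceil>) x0"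
      using crit_iff[of "nat \<lceil>\<tau>\<rceil>"] \<open>\<tau> > 0\<close> ceiling_correct[of \<tau>] by (auto simp: le_nat_iff)
    fix k assume "k \<ge> 1 \<and> (f ^^ k) x0 - (f ^^ Suc k) x0 \<le> 2 * \<epsilon> \<and> 2 * \<epsilon> < (f ^^ (k - 1)) x0 - (f ^^ k) x0"
    then have "\<lceil>\<tau>\<rceil> = int k" using crit_iff[of k] by (intro ceiling_unique) auto
    then show "k = nat \<lceil>\<tau>\<rceil>" by simp
  qed
qed

lemma length_diff_eq:
  assumes y: "y \<in> {0<..<x0}" and gy: "g y = 2 * \<epsilon>"
  obtains z where "z \<in> {f y..y}" "\<Psi> z = \<Psi> y + time_gap y"
    and "length_diff \<epsilon> = y - z - g y * time_gap y"
proof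
  define n where "n = nat \<lceil>\<Psi> y - \<Psi> x0\<rceil>"
  have y_in: "y \<in> {0<..<\<delta>0}" using y x0 by auto
  have "\<Psi> y - \<Psi> x0 > 0" using Psi_decreasing[OF y_in x0] y by simp
  then have n: "real n = of_int \<lceil>\<Psi> y - \<Psi> x0\<rceil>" by (simp add: n_def)
  show Psi_z: "\<Psi> ((f ^^ n) x0) = \<Psi> y + time_gap y"
    using Psi_orbit[of n] n by (simp add: time_gap_def)
  have fy: "f y \<in> {0<..<\<delta>0}" "\<Psi> (f y) = \<Psi> y + 1" using f_maps_to[OF y_in] f_Fatou in_domain[OF y_in] by auto
  show "(f ^^ n) x0 \<in> {f y..y}"
    using Psi_le_iff[OF y_in orbit_mem, of n] Psi_le_iff[OF orbit_mem fy(1), of n] Psi_z fy(2)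
      time_gap_bounds[of y] by auto
  have "flow \<Psi> d (\<Psi> y - \<Psi> x0) x0 = y" by (rule flow_eq[OF y_in]) simp
  then show "length_diff \<epsilon> = y - (f ^^ n) x0 - g y * time_gap y"
    unfolding length_diff_def cont_length_def disc_length_def Let_def
      cont_crit_eq[OF y gy] disc_crit_eq[OF y gy] n_def[symmetric]
    using n gy by (simp add: time_gap_def algebra_simps)
qed

lemma length_diff_at_orbit: "length_diff (g ((f ^^ Suc n) x0) / 2) = 0"
proof -
  let ?y = "(f ^^ Suc n) x0"
  have y: "?y \<in> {0<..<x0}" using orbit_mem[of "Suc n"] orbit_le_iff[of 0 "Suc n"] by auto
  have gap: "time_gap ?y = 0"
    using Psi_orbit[of "Suc n"] unfolding time_gap_def by simp
  obtain z where z: "z \<in> {f ?y..?y}" "\<Psi> z = \<Psi> ?y" "length_diff (g ?y / 2) = ?y - z"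
    using length_diff_eq[OF y, of "g ?y / 2"] gap by auto
  have "z \<in> {0<..<d}" "?y \<in> {0<..<d}"
    using z(1) f_maps_to[OF orbit_mem, of "Suc n"] orbit_mem[of "Suc n"] in_domain by auto
  then have "z = ?y" using inj_onD[OF Psi_inj z(2)] by blast
  then show ?thesis using z(3) by simp
qed

lemma eventually_crit_point:
  assumes "\<forall>\<^sub>F y in at_right 0. P y"
  shows "\<forall>\<^sub>F \<epsilon> in at_right 0. \<forall>y\<in>{0<..<x0}. g y = 2 * \<epsilon> \<longrightarrow> P y"
proof -
  obtain b where b: "b > 0" "\<And>y. 0 < y \<Longrightarrow> y < b \<Longrightarrow> P y"
    using assms unfolding eventually_at_right_field by auto
  define Y where "Y = min b x0 / 2"
  have Y: "Y \<in> {0<..<\<delta>0}" "Y < b" using b x0 by (auto simp: Y_def)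
  have "\<forall>\<^sub>F \<epsilon> in at_right 0. \<epsilon> < g Y / 2"
    using g_pos[OF Y(1)] eventually_at_right_real[of 0 "g Y / 2"] by (auto elim: eventually_mono)
  then show ?thesis
  proof eventually_elim
    case (elim \<epsilon>)
    show ?case
    proof (intro ballI impI)
      fix y assume y: "y \<in> {0<..<x0}" "g y = 2 * \<epsilon>"
      then have y_in: "y \<in> {0<..<\<delta>0}" using x0 by auto
      then have "y < Y" using g_le_iff[OF Y(1) y_in] y elim by auto
      then show "P y" using b(2) y Y by auto
    qed
  qed
qed

lemma length_diff_estimate:
  obtains c1 c2 where "c1 > 0" "c2 > 0"
    and "\<forall>\<^sub>F \<epsilon> in at_right 0. \<forall>y\<in>{0<..<x0}. g y = 2 * \<epsilon> \<longrightarrow>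
       \<bar>length_diff \<epsilon> - time_gap y * (1 - time_gap y) * W y / 2\<bar> \<le> W y / 16 \<and>
       c1 * orbit_scale \<alpha> m \<epsilon> \<le> W y \<and> W y \<le> c2 * orbit_scale \<alpha> m \<epsilon>"
proof -
  obtain c1 c2 where c: "c1 > 0" "c2 > 0" and bounds: "\<forall>\<^sub>F y in at_right 0.
      c1 * orbit_scale \<alpha> m (g y / 2) \<le> W y \<and> W y \<le> c2 * orbit_scale \<alpha> m (g y / 2)"
    using W_orbit_scale_bounds by blast
  have "\<forall>\<^sub>F y in at_right 0. \<forall>z\<in>{f y..y}.
      \<bar>y - z - g y * (\<Psi> z - \<Psi> y) - (\<Psi> z - \<Psi> y) * (1 - (\<Psi> z - \<Psi> y)) * W y / 2\<bar> \<le> 1/16 * W y"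
    using eventually_gap_second_order_estimate[of "1/16"] by simp
  with bounds have "\<forall>\<^sub>F y in at_right 0. (\<forall>z\<in>{f y..y}.
      \<bar>y - z - g y * (\<Psi> z - \<Psi> y) - (\<Psi> z - \<Psi> y) * (1 - (\<Psi> z - \<Psi> y)) * W y / 2\<bar> \<le> 1/16 * W y) \<and>
      c1 * orbit_scale \<alpha> m (g y / 2) \<le> W y \<and> W y \<le> c2 * orbit_scale \<alpha> m (g y / 2)"
    by eventually_elim auto
  from eventually_crit_point[OF this]
  have "\<forall>\<^sub>F \<epsilon> in at_right 0. \<forall>y\<in>{0<..<x0}. g y = 2 * \<epsilon> \<longrightarrow>
       \<bar>length_diff \<epsilon> - time_gap y * (1 - time_gap y) * W y / 2\<bar> \<le> W y / 16 \<and>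
       c1 * orbit_scale \<alpha> m \<epsilon> \<le> W y \<and> W y \<le> c2 * orbit_scale \<alpha> m \<epsilon>"
  proof eventually_elim
    case (elim \<epsilon>)
    show ?case
    proof (intro ballI impI)
      fix y assume y: "y \<in> {0<..<x0}" and gy: "g y = 2 * \<epsilon>"
      with elim have gap: "\<forall>z\<in>{f y..y}. \<bar>y - z - g y * (\<Psi> z - \<Psi> y)
          - (\<Psi> z - \<Psi> y) * (1 - (\<Psi> z - \<Psi> y)) * W y / 2\<bar> \<le> 1/16 * W y"
        and bounds: "c1 * orbit_scale \<alpha> m \<epsilon> \<le> W y \<and> W y \<le> c2 * orbit_scale \<alpha> m \<epsilon>"
        by auto
      obtain z where z: "z \<in> {f y..y}" "\<Psi> z = \<Psi> y + time_gap y"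
        and diff: "length_diff \<epsilon> = y - z - g y * time_gap y"
        using length_diff_eq[OF y gy] by blast
      have "\<bar>length_diff \<epsilon> - time_gap y * (1 - time_gap y) * W y / 2\<bar> \<le> W y / 16"
        using bspec[OF gap z(1)] unfolding diff z(2) by simp
      with bounds show "\<bar>length_diff \<epsilon> - time_gap y * (1 - time_gap y) * W y / 2\<bar> \<le> W y / 16 \<and>
          c1 * orbit_scale \<alpha> m \<epsilon> \<le> W y \<and> W y \<le> c2 * orbit_scale \<alpha> m \<epsilon>"
        by blast
    qed
  qed
  with c show thesis by (rule that)
qed

lemma length_diff_bounded:
  obtains c where "c > 0" "\<forall>\<^sub>F \<epsilon> in at_right 0. \<bar>length_diff \<epsilon>\<bar> \<le> c * orbit_scale \<alpha> m \<epsilon>"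
proof -
  obtain c1 c2 where "c2 > 0" and est: "\<forall>\<^sub>F \<epsilon> in at_right 0. \<forall>y\<in>{0<..<x0}. g y = 2 * \<epsilon> \<longrightarrow>
       \<bar>length_diff \<epsilon> - time_gap y * (1 - time_gap y) * W y / 2\<bar> \<le> W y / 16 \<and>
       c1 * orbit_scale \<alpha> m \<epsilon> \<le> W y \<and> W y \<le> c2 * orbit_scale \<alpha> m \<epsilon>"
    using length_diff_estimate by blast
  have "\<forall>\<^sub>F \<epsilon> in at_right 0. 0 < \<epsilon> \<and> 2 * \<epsilon> < g x0"
    using g_pos[OF x0] eventually_at_right_real[of 0 "g x0 / 2"] by (auto elim: eventually_mono)
  with est have "\<forall>\<^sub>F \<epsilon> in at_right 0. \<bar>length_diff \<epsilon>\<bar> \<le> c2 * orbit_scale \<alpha> m \<epsilon>"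
  proof eventually_elim
    case (elim \<epsilon>)
    then obtain y where y: "y \<in> {0<..<x0}" "g y = 2 * \<epsilon>" using crit_point_exists by blast
    with elim have approx: "\<bar>length_diff \<epsilon> - time_gap y * (1 - time_gap y) * W y / 2\<bar> \<le> W y / 16"
      and bound: "W y \<le> c2 * orbit_scale \<alpha> m \<epsilon>" by auto
    define t where "t = time_gap y"
    have "W y > 0" using W_pos y x0 by auto
    have "0 \<le> t * (1 - t)" using time_gap_bounds[of y] by (simp add: t_def)
    with \<open>W y > 0\<close> have "0 \<le> t * (1 - t) * W y" by simp
    have "t * (1 - t) \<le> 1/4"
      using zero_le_power2[of "t - 1/2"] by (simp add: power2_eq_square algebra_simps)
    with \<open>W y > 0\<close> have "t * (1 - t) * W y \<le> 1/4 * W y" by (intro mult_right_mono) auto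
    with \<open>0 \<le> t * (1 - t) * W y\<close> have "\<bar>length_diff \<epsilon>\<bar> \<le> W y"
      using approx \<open>W y > 0\<close> unfolding t_def by linarith
    with bound show ?case by linarith
  qed
  with \<open>c2 > 0\<close> show thesis by (rule that)
qed

lemma orbit_half_g_tendsto: "filterlim (\<lambda>n. g ((f ^^ Suc n) x0) / 2) (at_right 0) sequentially"
  using half_g_tendsto_at_right[OF orbit_mem LIMSEQ_Suc[OF orbit_tendsto_0]] .

definition "half_time_point n = flow \<Psi> d (real n + 1/2) x0"

lemma half_time_point_mem: "half_time_point n \<in> {0<..<x0}"
  and Psi_half_time_point: "\<Psi> (half_time_point n) = \<Psi> x0 + (real n + 1/2)"
proof -
  have "half_time_point n \<in> {0<..x0}" "\<Psi> (half_time_point n) = \<Psi> x0 + (real n + 1/2)"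
    using flow_mem[of "real n + 1/2"] unfolding half_time_point_def by auto
  then show "half_time_point n \<in> {0<..<x0}" "\<Psi> (half_time_point n) = \<Psi> x0 + (real n + 1/2)"
    by (auto simp: order_le_less)
qed

lemma half_time_point_half_g_tendsto:
  "filterlim (\<lambda>n. g (half_time_point n) / 2) (at_right 0) sequentially"
proof (rule half_g_tendsto_at_right)
  show mem: "half_time_point n \<in> {0<..<\<delta>0}" for n using half_time_point_mem[of n] x0 by auto
  show "half_time_point \<longlonglongrightarrow> 0"
  proof (rule tendsto_sandwich[OF _ _ tendsto_const orbit_tendsto_0])
    show "\<forall>\<^sub>F n in sequentially. 0 \<le> half_time_point n"
      using mem by (intro always_eventually) (simp add: less_imp_le)
    show "\<forall>\<^sub>F n in sequentially. half_time_point n \<le> (f ^^ n) x0"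
    proof (intro always_eventually allI)
      fix n show "half_time_point n \<le> (f ^^ n) x0"
        using Psi_le_iff[OF orbit_mem[of n] mem[of n]] Psi_orbit[of n] Psi_half_time_point[of n] by simp
    qed
  qed
qed

lemma time_gap_half_time_point: "time_gap (half_time_point n) = 1/2"
proof -
  have "\<lceil>real n + 1/2\<rceil> = int n + 1" by (rule ceiling_unique) auto
  then show ?thesis unfolding time_gap_def Psi_half_time_point by simp
qed

lemma length_diff_at_half_times:
  obtains c where "c > 0" "\<forall>\<^sub>F n in sequentially.
    c * orbit_scale \<alpha> m (g (half_time_point n) / 2) \<le> length_diff (g (half_time_point n) / 2)"
proof -
  obtain c1 c2 where "c1 > 0" and est: "\<forall>\<^sub>F \<epsilon> in at_right 0. \<forall>y\<in>{0<..<x0}. g y = 2 * \<epsilon> \<longrightarrow>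
       \<bar>length_diff \<epsilon> - time_gap y * (1 - time_gap y) * W y / 2\<bar> \<le> W y / 16 \<and>
       c1 * orbit_scale \<alpha> m \<epsilon> \<le> W y \<and> W y \<le> c2 * orbit_scale \<alpha> m \<epsilon>"
    using length_diff_estimate by blast
  from eventually_compose_filterlim[OF est half_time_point_half_g_tendsto]
  have "\<forall>\<^sub>F n in sequentially.
    c1 / 16 * orbit_scale \<alpha> m (g (half_time_point n) / 2) \<le> length_diff (g (half_time_point n) / 2)"
  proof eventually_elim
    case (elim n)
    let ?y = "half_time_point n"
    from bspec[OF elim half_time_point_mem[of n]]
    have approx: "\<bar>length_diff (g ?y / 2) - W ?y / 8\<bar> \<le> W ?y / 16"
      and bound: "c1 * orbit_scale \<alpha> m (g ?y / 2) \<le> W ?y"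
      unfolding time_gap_half_time_point by simp_all
    have "c1 / 16 * orbit_scale \<alpha> m (g ?y / 2) = c1 * orbit_scale \<alpha> m (g ?y / 2) / 16"
      by simp
    also have "\<dots> \<le> W ?y / 16" using bound by simp
    also have "\<dots> \<le> length_diff (g ?y / 2)" using approx unfolding abs_le_iff by linarith
    finally show ?case .
  qed
  moreover have "c1 / 16 > 0" using \<open>c1 > 0\<close> by simp
  ultimately show thesis using that by blast
qed

lemma length_diff_oscillates:
  "\<exists>k :: real \<Rightarrow> real.
     (\<forall>\<^sub>F \<epsilon> in at_right 0. cont_length \<Psi> d x0 \<epsilon> - disc_length f x0 \<epsilon>
         = \<epsilon> powr (2 - 1 / \<alpha>) * ell \<epsilon> powr (of_int m / \<alpha>) * k \<epsilon>) \<and>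
     k \<in> O[at_right 0](\<lambda>_. 1) \<and>
     high_amp_osc k \<and>
     (\<forall>c \<beta> \<gamma> :: real. \<not> (k \<sim>[at_right 0] (\<lambda>\<epsilon>. c * \<epsilon> powr \<beta> * ell \<epsilon> powr \<gamma>))) \<and>
     (\<exists>\<delta>'>0. (\<lambda>\<epsilon>. cont_length \<Psi> d x0 \<epsilon> - disc_length f x0 \<epsilon>)
         \<in> O[at_right 0](\<lambda>\<epsilon>. \<epsilon> powr (1 + \<delta>')))"
proof -
  define k where "k \<epsilon> = length_diff \<epsilon> / orbit_scale \<alpha> m \<epsilon>" for \<epsilon>
  obtain c where "c > 0" and bound: "\<forall>\<^sub>F \<epsilon> in at_right 0. \<bar>length_diff \<epsilon>\<bar> \<le> c * orbit_scale \<alpha> m \<epsilon>"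
    using length_diff_bounded by blast
  obtain c' where "c' > 0" and half: "\<forall>\<^sub>F n in sequentially.
      c' * orbit_scale \<alpha> m (g (half_time_point n) / 2) \<le> length_diff (g (half_time_point n) / 2)"
    using length_diff_at_half_times by blast
  have scale_pos: "\<forall>\<^sub>F \<epsilon> in at_right 0. orbit_scale \<alpha> m \<epsilon> > 0"
    using eventually_at_right_0_1 by eventually_elim (simp add: orbit_scale_pos)
  have factor: "\<forall>\<^sub>F \<epsilon> in at_right 0. length_diff \<epsilon> = orbit_scale \<alpha> m \<epsilon> * k \<epsilon>"
    using scale_pos by eventually_elim (simp add: k_def)
  have bounded: "k \<in> O[at_right 0](\<lambda>_. 1)"
  proof (rule bigoI[of _ c])
    show "\<forall>\<^sub>F \<epsilon> in at_right 0. norm (k \<epsilon>) \<le> c * norm (1::real)"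
      using bound scale_pos by eventually_elim (simp add: k_def abs_div divide_le_eq)
  qed
  have zero_at_orbit: "k (g ((f ^^ Suc n) x0) / 2) = 0" for n
    unfolding k_def length_diff_at_orbit by simp
  then have zero: "\<forall>\<^sub>F n in sequentially. k (g ((f ^^ Suc n) x0) / 2) \<le> 0"
    by (intro always_eventually allI) (simp only: order_refl)
  have "\<forall>\<^sub>F n in sequentially. c' \<le> k (g (half_time_point n) / 2)"
    using half eventually_compose_filterlim[OF scale_pos half_time_point_half_g_tendsto]
    by eventually_elim (simp add: k_def le_divide_eq)
  then have nonzero: "\<forall>\<^sub>F n in sequentially. k (g (half_time_point n) / 2) \<noteq> 0"
    using \<open>c' > 0\<close> by (auto elim: eventually_mono)
  have oscillating: "high_amp_osc k"
    by (rule high_amp_oscI[OF orbit_half_g_tendsto half_time_point_half_g_tendsto zero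
          \<open>\<forall>\<^sub>F n in sequentially. c' \<le> _\<close> \<open>c' > 0\<close>])
  have not_equiv: "\<not> k \<sim>[at_right 0] (\<lambda>\<epsilon>. c * \<epsilon> powr \<beta> * ell \<epsilon> powr \<gamma>)" for c \<beta> \<gamma>
    by (rule not_asymp_equiv_powr_ell[OF orbit_half_g_tendsto half_time_point_half_g_tendsto _ nonzero])
      (use zero_at_orbit in simp)
  have small: "length_diff \<in> O[at_right 0](\<lambda>\<epsilon>. \<epsilon> powr (1 + (1 - 1 / \<alpha>) / 2))"
  proof (rule landau_o.small_imp_big[OF landau_o.big_small_trans])
    show "length_diff \<in> O[at_right 0](orbit_scale \<alpha> m)"
    proof (rule bigoI[of _ c])
      show "\<forall>\<^sub>F \<epsilon> in at_right 0. norm (length_diff \<epsilon>) \<le> c * norm (orbit_scale \<alpha> m \<epsilon>)"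
        using bound scale_pos by eventually_elim simp
    qed
    show "orbit_scale \<alpha> m \<in> o[at_right 0](\<lambda>\<epsilon>. \<epsilon> powr (1 + (1 - 1 / \<alpha>) / 2))"
      unfolding orbit_scale_def using alpha_gt by (intro powr_ell_smallo_powr) (simp add: field_simps)
  qed
  have "(1 - 1 / \<alpha>) / 2 > 0" using alpha_gt by simp
  with factor bounded oscillating not_equiv small show ?thesis
    unfolding length_diff_def orbit_scale_def by blast
qed

end

theorem theoremB:
  fixes f \<xi> \<Psi> :: "real \<Rightarrow> real" and a \<alpha> d :: real and m :: int
  assumes "parabolic_dulac_germ f"
    and "a > 0" and "\<alpha> > 1" and "m \<le> 0"
    and "(\<lambda>x. f x - (x - a * x powr \<alpha> * ell x powr of_int m))
           \<in> o[at_right 0](\<lambda>x. x powr \<alpha> * ell x powr of_int m)"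
    and "d > 0"
    and "real_analytic_on \<xi> {0<..<d}"
    and "\<xi> \<sim>[at_right 0] (\<lambda>x. - a * x powr \<alpha> * ell x powr of_int m)"
    and "(\<lambda>x. deriv \<xi> x) \<sim>[at_right 0] (\<lambda>x. - a * \<alpha> * x powr (\<alpha> - 1) * ell x powr of_int m)"
    and "(\<lambda>x. \<xi> x + (x - f x) + \<xi> x * deriv \<xi> x / 2)
           \<in> o[at_right 0](\<lambda>x. x powr (2 * \<alpha> - 1) * ell x powr of_int (2 * m))"
    and "\<forall>x\<in>{0<..<d}. \<xi> x \<noteq> 0 \<and> (\<Psi> has_real_derivative 1 / \<xi> x) (at x)"
    and "\<forall>x\<in>{0<..<d}. f x \<in> {0<..<d} \<and> \<Psi> (f x) = \<Psi> x + 1"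
  shows "\<exists>\<delta>>0. \<forall>x0\<in>{0<..<\<delta>}. \<exists>k :: real \<Rightarrow> real.
           (\<forall>\<^sub>F \<epsilon> in at_right 0. cont_length \<Psi> d x0 \<epsilon> - disc_length f x0 \<epsilon>
               = \<epsilon> powr (2 - 1 / \<alpha>) * ell \<epsilon> powr (of_int m / \<alpha>) * k \<epsilon>) \<and>
           k \<in> O[at_right 0](\<lambda>_. 1) \<and>
           high_amp_osc k \<and>
           (\<forall>c \<beta> \<gamma> :: real. \<not> (k \<sim>[at_right 0] (\<lambda>\<epsilon>. c * \<epsilon> powr \<beta> * ell \<epsilon> powr \<gamma>))) \<and>
           (\<exists>\<delta>'>0. (\<lambda>\<epsilon>. cont_length \<Psi> d x0 \<epsilon> - disc_length f x0 \<epsilon>)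
               \<in> O[at_right 0](\<lambda>\<epsilon>. \<epsilon> powr (1 + \<delta>')))"
proof -
  interpret fatou_setting f \<xi> \<Psi> a \<alpha> d m
    by unfold_locales (use assms in auto)
  obtain \<delta>0 where "\<delta>0 > 0" "\<delta>0 \<le> d" and signs: "\<forall>x\<in>{0<..<\<delta>0}. \<xi> x < 0 \<and> deriv \<xi> x < 0 \<and>
      g x > 0 \<and> (f has_real_derivative deriv f x) (at x)"
    using near_zero_radius_exists by blast
  have "fatou_orbit f \<xi> \<Psi> a \<alpha> d m \<delta>0 x0" if "x0 \<in> {0<..<\<delta>0}" for x0
    by unfold_locales (use \<open>\<delta>0 > 0\<close> \<open>\<delta>0 \<le> d\<close> signs that in auto)
  then show ?thesis using fatou_orbit.length_diff_oscillates \<open>\<delta>0 > 0\<close> by blast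
qed

end
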